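(* Let $n\ge 2$ and $F_n=\langle x_1,\dots,x_n\rangle$. Let $S=\{x_jx_ix_j^{-1},\ x_j^{-1}x_ix_j : i,j\in\{1,\dots,n\},\ i\ne j\}$ (a set of $2n(n-1)$ elements), let $G=\langle S\rangle$, and for each $s\in S$ let $G_s=\langle S\setminus\{s\}\rangle$. Then the coset incidence system $\Gamma=\Gamma(G;(G_s)_{s\in S})$ is a residually connected and flag-transitive geometry. Moreover, the group $K=\langle\phi_1,\phi_\rho,\phi_\tau\rangle\le\mathrm{Aut}(F_n)$, where $\phi_1(x_1,\dots,x_n)=(x_1^{-1},x_2,\dots,x_n)$, $\phi_\rho(x_1,\dots,x_n)=(x_2,\dots,x_n,x_1)$ and $\phi_\tau(x_1,\dots,x_n)=(x_2,x_1,x_3,\dots,x_n)$ (so $K\cong C_2^n\rtimes\mathrm{Sym}(n)$), acts on $\Gamma$ as a group of correlations: each $\phi\in K$ satisfies $\phi(G)=G$, permutes the subgroups $G_s$, and induces the correlation $G_sg\mapsto \phi(G_s)\phi(g)$ of $\Gamma$.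
   Context: An incidence system is a quadruple $\Gamma=(X,*,t,I)$ with $X$ a set, $I$ a finite type set, $t:X\to I$ surjective, and $*$ a symmetric relation with no two elements of the same type incident. A flag is a set of pairwise incident elements; a chamber is a flag containing an element of each type; $\Gamma$ is a geometry if every flag is contained in a chamber. The residue of a flag $F$ is the incidence system (induced types and incidence) of elements not in $F$ incident with all elements of $F$. A geometry is residually connected if the incidence graph of every residue of rank at least two is connected (the residue of the empty flag is $\Gamma$ itself). A correlation of $\Gamma$ is a permutation $\alpha$ of $X$ with $t(x)=t(y)\iff t(\alpha x)=t(\alpha y)$ and $x*y\iff \alpha x*\alpha y$. Coset incidence system: for a group $G$ with subgroups $(G_i)_{i\in I}$, $\Gamma(G;(G_i)_{i\in I})$ has elements the right cosets $G_ig$, type $t(G_ig)=i$, and $G_ig_1*G_jg_2$ iff $G_ig_1\cap G_jg_2\ne\emptyset$; $G$ acts by right multiplication. It is flag-transitive if $G$ is transitive on the flags of type $J$ for every $J\subseteq I$. *)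

theory Defs
  imports "HOL-Algebra.Algebra"
begin

section \<open>Free group F_n on generators x_0, ..., x_(n-1) (paper: x_1, ..., x_n)\<close>

text \<open>A letter (i, b) stands for x_i if b = False and for x_i^(-1) if b = True.
  Elements of F_n are freely reduced words over letters with index < n.\<close>

type_synonym letter = "nat \<times> bool"

definition cancels :: "letter \<Rightarrow> letter \<Rightarrow> bool" where
  "cancels a b \<longleftrightarrow> fst a = fst b \<and> snd a \<noteq> snd b"

fun reduced :: "letter list \<Rightarrow> bool" where
  "reduced [] = True"
| "reduced [a] = True"
| "reduced (a # b # w) = (\<not> cancels a b \<and> reduced (b # w))"

fun red_cons :: "letter \<Rightarrow> letter list \<Rightarrow> letter list" where
  "red_cons a [] = [a]"
| "red_cons a (b # w) = (if cancels a b then w else a # b # w)"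

definition reduce :: "letter list \<Rightarrow> letter list" where
  "reduce w = foldr red_cons w []"

definition FreeGrp :: "nat \<Rightarrow> letter list monoid" where
  "FreeGrp n = \<lparr> carrier = {w. reduced w \<and> (\<forall>a \<in> set w. fst a < n)},
                 monoid.mult = (\<lambda>u v. reduce (u @ v)),
                 monoid.one = [] \<rparr>"

definition gen :: "nat \<Rightarrow> letter list" where
  "gen i = [(i, False)]"

text \<open>Extension of an assignment of group elements to the generators to a map on words
  (the substitution endomorphism), restricted to the carrier (extensional, as in auto).\<close>
definition fsubst :: "nat \<Rightarrow> (nat \<Rightarrow> letter list) \<Rightarrow> letter list \<Rightarrow> letter list" where
  "fsubst n f = (\<lambda>w \<in> carrier (FreeGrp n).
      foldr (\<lambda>a acc. (if snd a then inv\<^bsub>FreeGrp n\<^esub> (f (fst a)) else f (fst a)) \<otimes>\<^bsub>FreeGrp n\<^esub> acc)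
            w \<one>\<^bsub>FreeGrp n\<^esub>)"

definition phi1 :: "nat \<Rightarrow> letter list \<Rightarrow> letter list" where
  "phi1 n = fsubst n (\<lambda>i. if i = 0 then inv\<^bsub>FreeGrp n\<^esub> (gen 0) else gen i)"

definition phi_rho :: "nat \<Rightarrow> letter list \<Rightarrow> letter list" where
  "phi_rho n = fsubst n (\<lambda>i. gen ((i + 1) mod n))"

definition phi_tau :: "nat \<Rightarrow> letter list \<Rightarrow> letter list" where
  "phi_tau n = fsubst n (\<lambda>i. if i = 0 then gen 1 else if i = 1 then gen 0 else gen i)"

definition Kgrp :: "nat \<Rightarrow> (letter list \<Rightarrow> letter list) set" where
  "Kgrp n = generate (AutoGroup (FreeGrp n)) {phi1 n, phi_rho n, phi_tau n}"

definition Sset :: "nat \<Rightarrow> letter list set" where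
  "Sset n = {gen j \<otimes>\<^bsub>FreeGrp n\<^esub> gen i \<otimes>\<^bsub>FreeGrp n\<^esub> inv\<^bsub>FreeGrp n\<^esub> (gen j) | i j. i < n \<and> j < n \<and> i \<noteq> j}
          \<union> {inv\<^bsub>FreeGrp n\<^esub> (gen j) \<otimes>\<^bsub>FreeGrp n\<^esub> gen i \<otimes>\<^bsub>FreeGrp n\<^esub> gen j | i j. i < n \<and> j < n \<and> i \<noteq> j}"

definition Ggrp :: "nat \<Rightarrow> letter list set" where
  "Ggrp n = generate (FreeGrp n) (Sset n)"

definition Gsub :: "nat \<Rightarrow> letter list \<Rightarrow> letter list set" where
  "Gsub n s = generate (FreeGrp n) (Sset n - {s})"

definition is_incidence_system :: "'x set \<Rightarrow> ('x \<Rightarrow> 'x \<Rightarrow> bool) \<Rightarrow> ('x \<Rightarrow> 't) \<Rightarrow> 't set \<Rightarrow> bool" where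
  "is_incidence_system Xs inc typ I \<longleftrightarrow> finite I \<and> typ ` Xs = I \<and>
     (\<forall>x\<in>Xs. \<forall>y\<in>Xs. inc x y \<longleftrightarrow> inc y x) \<and>
     (\<forall>x\<in>Xs. \<forall>y\<in>Xs. x \<noteq> y \<and> typ x = typ y \<longrightarrow> \<not> inc x y)"

definition is_flag :: "'x set \<Rightarrow> ('x \<Rightarrow> 'x \<Rightarrow> bool) \<Rightarrow> 'x set \<Rightarrow> bool" where
  "is_flag Xs inc F \<longleftrightarrow> F \<subseteq> Xs \<and> (\<forall>x\<in>F. \<forall>y\<in>F. x \<noteq> y \<longrightarrow> inc x y)"

definition is_chamber :: "'x set \<Rightarrow> ('x \<Rightarrow> 'x \<Rightarrow> bool) \<Rightarrow> ('x \<Rightarrow> 't) \<Rightarrow> 't set \<Rightarrow> 'x set \<Rightarrow> bool" where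
  "is_chamber Xs inc typ I C \<longleftrightarrow> is_flag Xs inc C \<and> typ ` C = I"

definition is_geometry :: "'x set \<Rightarrow> ('x \<Rightarrow> 'x \<Rightarrow> bool) \<Rightarrow> ('x \<Rightarrow> 't) \<Rightarrow> 't set \<Rightarrow> bool" where
  "is_geometry Xs inc typ I \<longleftrightarrow>
     (\<forall>F. is_flag Xs inc F \<longrightarrow> (\<exists>C. is_chamber Xs inc typ I C \<and> F \<subseteq> C))"

text \<open>Elements of the residue of the flag F (its types are I - typ ` F, incidence induced).\<close>
definition residue :: "'x set \<Rightarrow> ('x \<Rightarrow> 'x \<Rightarrow> bool) \<Rightarrow> 'x set \<Rightarrow> 'x set" where
  "residue Xs inc F = {x \<in> Xs - F. \<forall>y\<in>F. inc x y}"

definition graph_connected :: "'x set \<Rightarrow> ('x \<Rightarrow> 'x \<Rightarrow> bool) \<Rightarrow> bool" where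
  "graph_connected V E \<longleftrightarrow> (\<forall>x\<in>V. \<forall>y\<in>V. (\<lambda>a b. a \<in> V \<and> b \<in> V \<and> E a b)\<^sup>*\<^sup>* x y)"

definition residually_connected :: "'x set \<Rightarrow> ('x \<Rightarrow> 'x \<Rightarrow> bool) \<Rightarrow> ('x \<Rightarrow> 't) \<Rightarrow> 't set \<Rightarrow> bool" where
  "residually_connected Xs inc typ I \<longleftrightarrow>
     (\<forall>F. is_flag Xs inc F \<and> card (I - typ ` F) \<ge> 2 \<longrightarrow> graph_connected (residue Xs inc F) inc)"

definition is_correlation :: "'x set \<Rightarrow> ('x \<Rightarrow> 'x \<Rightarrow> bool) \<Rightarrow> ('x \<Rightarrow> 't) \<Rightarrow> ('x \<Rightarrow> 'x) \<Rightarrow> bool" where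
  "is_correlation Xs inc typ \<alpha> \<longleftrightarrow> bij_betw \<alpha> Xs Xs \<and>
     (\<forall>x\<in>Xs. \<forall>y\<in>Xs. (typ x = typ y \<longleftrightarrow> typ (\<alpha> x) = typ (\<alpha> y)) \<and> (inc x y \<longleftrightarrow> inc (\<alpha> x) (\<alpha> y)))"

text \<open>Distinct elements
  are incident iff they have different types and the cosets intersect (elements of the
  same type are distinct cosets of the same subgroup, hence disjoint).\<close>

definition coset_elems :: "('g, 'm) monoid_scheme \<Rightarrow> 'g set \<Rightarrow> 'i set \<Rightarrow> ('i \<Rightarrow> 'g set) \<Rightarrow> ('i \<times> 'g set) set" where
  "coset_elems M G I H = {(i, H i #>\<^bsub>M\<^esub> g) | i g. i \<in> I \<and> g \<in> G}"

definition coset_inc :: "('i \<times> 'g set) \<Rightarrow> ('i \<times> 'g set) \<Rightarrow> bool" where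
  "coset_inc x y \<longleftrightarrow> fst x \<noteq> fst y \<and> snd x \<inter> snd y \<noteq> {}"

definition coset_act :: "('g, 'm) monoid_scheme \<Rightarrow> 'g \<Rightarrow> ('i \<times> 'g set) \<Rightarrow> ('i \<times> 'g set)" where
  "coset_act M h x = (fst x, snd x #>\<^bsub>M\<^esub> h)"

definition flag_transitive :: "('g, 'm) monoid_scheme \<Rightarrow> 'g set \<Rightarrow> 'i set \<Rightarrow> ('i \<Rightarrow> 'g set) \<Rightarrow> bool" where
  "flag_transitive M G I H \<longleftrightarrow>
     (\<forall>J \<subseteq> I. \<forall>F1 F2. is_flag (coset_elems M G I H) coset_inc F1 \<and> fst ` F1 = J
        \<and> is_flag (coset_elems M G I H) coset_inc F2 \<and> fst ` F2 = J
        \<longrightarrow> (\<exists>h \<in> G. coset_act M h ` F1 = F2))"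

end

theory Submission
  imports Defs
begin

text \<open>The set \<open>S\<close> of conjugates \<open>x\<^sub>j\<^sup>\<pm>\<^sup>1 x\<^sub>i x\<^sub>j\<^sup>\<mp>\<^sup>1\<close> is a free basis of
  \<open>G = \<langle>S\<rangle>\<close>: in the reduced form of a product of conjugates no cancellation reaches the
  middle letter of the leading one. So \<open>\<Gamma>\<close> is the coset geometry of a free group over the
  subgroups \<open>G\<^sub>s\<close> generated by all basis elements but one. There, pairwise intersecting cosets
  have a common element: a coset of \<open>G\<^sub>s\<close> has a canonical representative that is empty or
  starts with \<open>s\<^sup>\<pm>\<^sup>1\<close>, every element of the coset ends with it, and of pairwise meeting cosets
  the longest canonical representative lies in all of them. This Helly property gives the
  geometry and flag-transitivity. The stabiliser \<open>\<langle>S - J\<rangle>\<close> of a flag of type \<open>J\<close> is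
  generated by the stabilisers \<open>\<langle>S - J - {i}\<rangle>\<close> as soon as \<open>|S - J| \<ge> 2\<close>, which yields residual
  connectedness. Finally every \<open>\<phi> \<in> K\<close> permutes \<open>S \<union> S\<^sup>-\<^sup>1\<close>, hence permutes \<open>S\<close> up to
  inversion and maps each \<open>G\<^sub>s\<close> onto \<open>G\<^bsub>\<sigma> s\<^esub>\<close>.\<close>

lemma hom_r_coset:
  assumes "h \<in> hom G G'" "A \<subseteq> carrier G" "x \<in> carrier G"
  shows "h ` (A #>\<^bsub>G\<^esub> x) = h ` A #>\<^bsub>G'\<^esub> h x"
  using assms by (auto simp: r_coset_def hom_mult subset_iff) (force simp: hom_mult subset_iff)

lemma (in group) generate_induct_left_mult:
  assumes h: "h \<in> generate G U" and U: "U \<subseteq> carrier G" and one: "P \<one>"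
    and step: "\<And>u k. u \<in> U \<union> m_inv G ` U \<Longrightarrow> k \<in> generate G U \<Longrightarrow> P k \<Longrightarrow> P (u \<otimes> k)"
  shows "P h"
proof -
  have carrier: "generate G U \<subseteq> carrier G" using generate_incl[OF U] .
  have "\<forall>k\<in>generate G U. P k \<longrightarrow> P (h \<otimes> k)" using h
  proof induction
    case one
    show ?case using carrier by auto
  next
    case (eng h1 h2)
    have "h1 \<in> carrier G" "h2 \<in> carrier G" using eng.hyps carrier by blast+
    moreover have "h2 \<otimes> k \<in> generate G U" if "k \<in> generate G U" for k
      using generate.eng[OF eng.hyps(2) that] .
    ultimately show ?case using eng.IH carrier by (auto simp: m_assoc)
  next
    case (incl u)
    thus ?case using step[OF UnI1[OF incl.hyps]] by blast
  next
    case (inv u)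
    thus ?case using step[OF UnI2[OF imageI[OF inv.hyps]]] by blast
  qed
  thus ?thesis using one generate.one[of G U] h carrier by (metis r_one subsetD)
qed

lemma (in group) signed_permutation_of_hom:
  assumes hom: "\<phi> \<in> hom G G" and inj: "inj_on \<phi> (carrier G)"
    and B: "finite B" "B \<subseteq> carrier G" "B \<inter> m_inv G ` B = {}"
    and stable: "\<phi> ` (B \<union> m_inv G ` B) \<subseteq> B \<union> m_inv G ` B"
  obtains \<sigma> where "bij_betw \<sigma> B B" "\<And>b. b \<in> B \<Longrightarrow> \<phi> b = \<sigma> b \<or> \<phi> b = inv (\<sigma> b)"
proof -
  interpret \<phi>: group_hom G G \<phi> by (simp add: group_hom_def group_hom_axioms_def is_group hom)
  define \<sigma> where "\<sigma> b = (if \<phi> b \<in> B then \<phi> b else inv (\<phi> b))" for b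
  have \<sigma>: "\<sigma> b \<in> B" "\<phi> b = \<sigma> b \<or> \<phi> b = inv (\<sigma> b)" if "b \<in> B" for b
  proof -
    have "\<phi> b \<in> B \<or> (\<exists>c\<in>B. \<phi> b = inv c)" using stable that by blast
    thus "\<sigma> b \<in> B" "\<phi> b = \<sigma> b \<or> \<phi> b = inv (\<sigma> b)"
      using B(2) by (auto simp: \<sigma>_def subset_iff)
  qed
  have "inj_on \<sigma> B"
  proof (rule inj_onI)
    fix s t assume st: "s \<in> B" "t \<in> B" "\<sigma> s = \<sigma> t"
    have carr: "s \<in> carrier G" "t \<in> carrier G" "\<sigma> s \<in> carrier G" using st \<sigma> B(2) by blast+
    have no_inv: "s \<noteq> inv t" "t \<noteq> inv s" using B(3) st by blast+
    from \<sigma>(2)[OF st(1)] \<sigma>(2)[OF st(2)]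
    have "\<phi> s = \<phi> t \<or> \<phi> s = \<phi> (inv t) \<or> \<phi> t = \<phi> (inv s)"
      using st(3) carr by auto
    thus "s = t" using inj_onD[OF inj] carr no_inv by blast
  qed
  moreover have "\<sigma> ` B = B" using endo_inj_surj[OF B(1) _ calculation] \<sigma>(1) by blast
  ultimately show thesis using that \<sigma>(2) by (simp add: bij_betw_def)
qed

lemma (in group) hom_image_generate_signed:
  assumes hom: "\<phi> \<in> hom G G" and B: "B \<subseteq> carrier G" and Q: "Q \<subseteq> B"
    and \<sigma>: "\<And>b. b \<in> B \<Longrightarrow> \<sigma> b \<in> B \<and> (\<phi> b = \<sigma> b \<or> \<phi> b = inv (\<sigma> b))"
  shows "\<phi> ` generate G Q = generate G (\<sigma> ` Q)"
proof -
  interpret \<phi>: group_hom G G \<phi> by (simp add: group_hom_def group_hom_axioms_def is_group hom)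
  have QC: "Q \<subseteq> carrier G" and \<sigma>QC: "\<sigma> ` Q \<subseteq> carrier G" using Q B \<sigma> by blast+
  have "\<phi> ` Q \<subseteq> generate G (\<sigma> ` Q)"
    using \<sigma> Q by (force intro: generate.incl generate.inv)
  moreover have "\<sigma> ` Q \<subseteq> generate G (\<phi> ` Q)"
  proof
    fix y assume "y \<in> \<sigma> ` Q"
    then obtain q where q: "q \<in> Q" "y = \<sigma> q" by blast
    have "\<sigma> q \<in> carrier G" "\<phi> q = \<sigma> q \<or> \<phi> q = inv (\<sigma> q)" using \<sigma>[of q] q(1) Q B by auto
    hence "\<sigma> q = \<phi> q \<or> \<sigma> q = inv (\<phi> q)" by auto
    moreover have \<phi>q: "\<phi> q \<in> \<phi> ` Q" using q(1) by blast
    ultimately show "y \<in> generate G (\<phi> ` Q)"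
      using q(2) generate.incl[OF \<phi>q, of G] generate.inv[OF \<phi>q, of G] by auto
  qed
  ultimately have "generate G (\<phi> ` Q) = generate G (\<sigma> ` Q)"
    using generate_subgroup_incl generate_is_subgroup QC \<sigma>QC
    by (metis \<phi>.hom_closed image_subset_iff subset_antisym subsetD)
  thus ?thesis using \<phi>.generate_img[OF QC] by simp
qed

lemma (in group) subgroup_auto_stabilising:
  assumes "finite T" "T \<subseteq> carrier G"
  shows "subgroup {\<phi> \<in> auto G. \<phi> ` T \<subseteq> T} (AutoGroup G)"
proof -
  interpret A: group "AutoGroup G" by (rule AutoGroup)
  have carrier_A: "carrier (AutoGroup G) = auto G" by (simp add: AutoGroup_def BijGroup_def)
  have mult_A: "\<phi> \<otimes>\<^bsub>AutoGroup G\<^esub> \<psi> = compose (carrier G) \<phi> \<psi>" if "\<phi> \<in> auto G" "\<psi> \<in> auto G" for \<phi> \<psi>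
    using that by (simp add: AutoGroup_def BijGroup_def auto_def)
  have onto: "\<phi> ` T = T" if "\<phi> \<in> auto G" "\<phi> ` T \<subseteq> T" for \<phi>
    using that assms endo_inj_surj inj_on_subset by (metis auto_def Bij_def bij_betw_def mem_Collect_eq Int_iff)
  show ?thesis
  proof (rule subgroup.intro)
    show "{\<phi> \<in> auto G. \<phi> ` T \<subseteq> T} \<subseteq> carrier (AutoGroup G)" using carrier_A by blast
  next
    fix \<phi> \<psi> assume "\<phi> \<in> {\<phi> \<in> auto G. \<phi> ` T \<subseteq> T}" "\<psi> \<in> {\<phi> \<in> auto G. \<phi> ` T \<subseteq> T}"
    thus "\<phi> \<otimes>\<^bsub>AutoGroup G\<^esub> \<psi> \<in> {\<phi> \<in> auto G. \<phi> ` T \<subseteq> T}"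
      using A.m_closed[of \<phi> \<psi>] mult_A assms(2) by (auto simp: carrier_A compose_def image_subset_iff)
  next
    show "\<one>\<^bsub>AutoGroup G\<^esub> \<in> {\<phi> \<in> auto G. \<phi> ` T \<subseteq> T}"
      using A.one_closed assms(2) by (auto simp: carrier_A AutoGroup_def BijGroup_def)
  next
    fix \<phi> assume \<phi>: "\<phi> \<in> {\<phi> \<in> auto G. \<phi> ` T \<subseteq> T}"
    define \<psi> where "\<psi> = inv\<^bsub>AutoGroup G\<^esub> \<phi>"
    have \<psi>: "\<psi> \<in> auto G" using A.inv_closed \<phi> by (simp add: \<psi>_def carrier_A)
    have "compose (carrier G) \<psi> \<phi> = (\<lambda>x\<in>carrier G. x)"
      using A.l_inv[of \<phi>] \<phi> \<psi> mult_A by (simp add: \<psi>_def carrier_A AutoGroup_def BijGroup_def)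
    hence \<psi>\<phi>: "\<psi> (\<phi> x) = x" if "x \<in> carrier G" for x
      using that by (metis compose_eq restrict_apply')
    have "\<psi> ` T \<subseteq> T"
    proof
      fix y assume "y \<in> \<psi> ` T"
      then obtain z where z: "z \<in> T" "y = \<psi> z" by blast
      have "z \<in> \<phi> ` T" using z(1) onto \<phi> by auto
      then obtain x where "x \<in> T" "z = \<phi> x" by blast
      thus "y \<in> T" using z(2) \<psi>\<phi> assms(2) by auto
    qed
    thus "inv\<^bsub>AutoGroup G\<^esub> \<phi> \<in> {\<phi> \<in> auto G. \<phi> ` T \<subseteq> T}" using \<psi> by (simp add: \<psi>_def)
  qed
qed

section \<open>Coset geometries with the Helly property\<close>

definition helly_cosets ::
  "('g, 'm) monoid_scheme \<Rightarrow> 'g set \<Rightarrow> 'i set \<Rightarrow> ('i \<Rightarrow> 'g set) \<Rightarrow> bool" where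
  "helly_cosets M G I H \<longleftrightarrow>
     (\<forall>F \<subseteq> coset_elems M G I H. finite F \<longrightarrow> (\<forall>x\<in>F. \<forall>y\<in>F. snd x \<inter> snd y \<noteq> {})
        \<longrightarrow> (\<exists>g\<in>G. \<forall>x\<in>F. g \<in> snd x))"

locale coset_geometry = group M for M :: "('g, 'm) monoid_scheme" (structure) +
  fixes G :: "'g set" and I :: "'i set" and H :: "'i \<Rightarrow> 'g set"
  assumes subgroup_G: "subgroup G M"
    and subgroup_H: "i \<in> I \<Longrightarrow> subgroup (H i) M"
    and H_subset_G: "i \<in> I \<Longrightarrow> H i \<subseteq> G"
    and finite_types: "finite I"
begin

abbreviation elems :: "('i \<times> 'g set) set" where
  "elems \<equiv> coset_elems M G I H"

definition std_flag :: "'i set \<Rightarrow> 'g \<Rightarrow> ('i \<times> 'g set) set" where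
  "std_flag J g = (\<lambda>i. (i, H i #> g)) ` J"

definition parabolic :: "'i set \<Rightarrow> 'g set" where
  "parabolic J = G \<inter> (\<Inter>j\<in>J. H j)"

lemma elems_iff: "x \<in> elems \<longleftrightarrow> (\<exists>i\<in>I. \<exists>g\<in>G. x = (i, H i #> g))"
  by (auto simp: coset_elems_def)

lemma G_carrier: "g \<in> G \<Longrightarrow> g \<in> carrier M"
  using subgroup.subset[OF subgroup_G] by blast

lemma H_carrier: "i \<in> I \<Longrightarrow> H i \<subseteq> carrier M"
  using subgroup.subset[OF subgroup_H] by blast

lemma coset_self: "i \<in> I \<Longrightarrow> g \<in> G \<Longrightarrow> g \<in> H i #> g"
  using rcos_self[OF G_carrier subgroup_H] .

lemma coset_repr: "i \<in> I \<Longrightarrow> g \<in> G \<Longrightarrow> y \<in> H i #> g \<Longrightarrow> H i #> g = H i #> y"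
  using repr_independence[OF _ G_carrier subgroup_H] by blast

lemma coset_in_G: "i \<in> I \<Longrightarrow> g \<in> G \<Longrightarrow> y \<in> H i #> g \<Longrightarrow> y \<in> G"
  using H_subset_G subgroup.m_closed[OF subgroup_G] by (auto simp: r_coset_def)

lemma coset_mult: "i \<in> I \<Longrightarrow> g \<in> G \<Longrightarrow> h \<in> G \<Longrightarrow> H i #> g #> h = H i #> (g \<otimes> h)"
  using coset_mult_assoc[OF H_carrier G_carrier G_carrier] .

lemma incidence_system: "is_incidence_system elems coset_inc fst I"
proof -
  have "fst ` elems = I"
    using subgroup.one_closed[OF subgroup_G] by (force simp: elems_iff)
  thus ?thesis by (auto simp: is_incidence_system_def finite_types coset_inc_def)
qed

lemma flag_types: "is_flag elems coset_inc F \<Longrightarrow> fst ` F \<subseteq> I"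
  by (auto simp: is_flag_def elems_iff)

lemma finite_flag: "is_flag elems coset_inc F \<Longrightarrow> finite F"
proof -
  assume F: "is_flag elems coset_inc F"
  hence "inj_on fst F" by (auto simp: is_flag_def inj_on_def coset_inc_def)
  thus "finite F" using flag_types[OF F] finite_types finite_imageD finite_subset by metis
qed

lemma flag_elemE:
  assumes "is_flag elems coset_inc F" "x \<in> F"
  obtains i g where "i \<in> I" "g \<in> G" "x = (i, H i #> g)"
proof -
  have "x \<in> elems" using assms by (auto simp: is_flag_def)
  thus thesis using that unfolding elems_iff by blast
qed

lemma std_flag_is_flag:
  assumes "J \<subseteq> I" "g \<in> G"
  shows "is_flag elems coset_inc (std_flag J g)"
proof -
  have "(H i #> g) \<inter> (H j #> g) \<noteq> {}" if "i \<in> J" "j \<in> J" for i j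
    using coset_self assms that by blast
  thus ?thesis using assms by (auto simp: is_flag_def elems_iff coset_inc_def std_flag_def)
qed

lemma fst_std_flag [simp]: "fst ` std_flag J g = J"
  by (force simp: std_flag_def)

lemma flag_eq_std_flag:
  assumes F: "is_flag elems coset_inc F" and g: "g \<in> G" "\<forall>x\<in>F. g \<in> snd x"
  shows "F = std_flag (fst ` F) g"
proof -
  have "x = (fst x, H (fst x) #> g)" if x: "x \<in> F" for x
  proof -
    obtain i h where "i \<in> I" "h \<in> G" "x = (i, H i #> h)" by (rule flag_elemE[OF F x])
    thus ?thesis using g x coset_repr coset_self coset_in_G by (metis fst_conv snd_conv)
  qed
  thus ?thesis by (auto simp: std_flag_def image_iff)
qed

lemma subgroup_parabolic: "J \<subseteq> I \<Longrightarrow> subgroup (parabolic J) M"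
proof -
  assume J: "J \<subseteq> I"
  have "parabolic J = \<Inter> (insert G (H ` J))" by (auto simp: parabolic_def)
  thus ?thesis using subgroups_Inter[of "insert G (H ` J)"] subgroup_G subgroup_H J by auto
qed

lemma parabolic_mono: "J \<subseteq> J' \<Longrightarrow> parabolic J' \<subseteq> parabolic J"
  by (auto simp: parabolic_def)

lemma parabolic_carrier: "h \<in> parabolic J \<Longrightarrow> h \<in> carrier M"
  by (auto simp: parabolic_def G_carrier)

text \<open>Multiplying on the left by an element of \<open>parabolic (insert i J)\<close> fixes the element of
  type \<open>i\<close>, which is adjacent to all the others: so connectivity to a base point propagates
  along a generating set of \<open>parabolic J\<close>.\<close>

lemma connected_std_residue:
  assumes J: "J \<subseteq> I" and g: "g \<in> G"
    and gen: "parabolic J \<subseteq> generate M (\<Union>i\<in>I - J. parabolic (insert i J))"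
  shows "graph_connected {(t, H t #> (h \<otimes> g)) | t h. t \<in> I - J \<and> h \<in> parabolic J} coset_inc"
proof (cases "I - J = {}")
  case False
  then obtain t0 where t0: "t0 \<in> I - J" by blast
  define U where "U = (\<Union>i\<in>I - J. parabolic (insert i J))"
  define V where "V = {(t, H t #> (h \<otimes> g)) | t h. t \<in> I - J \<and> h \<in> parabolic J}"
  define E where "E = (\<lambda>a b. a \<in> V \<and> b \<in> V \<and> coset_inc a b)"
  define P where "P h \<longleftrightarrow> (\<forall>t\<in>I - J. E\<^sup>*\<^sup>* (t, H t #> (h \<otimes> g)) (t0, H t0 #> g))" for h
  have PJ: "subgroup (parabolic J) M" using subgroup_parabolic[OF J] .
  have U: "U \<subseteq> parabolic J" unfolding U_def using parabolic_mono by blast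
  have gen_U: "generate M U \<subseteq> parabolic J" by (rule generate_subgroup_incl[OF U PJ])
  have hg: "h \<otimes> g \<in> G" if "h \<in> parabolic J" for h
    using that g subgroup.m_closed[OF subgroup_G] by (auto simp: parabolic_def)
  have adj: "E (t, H t #> (h \<otimes> g)) (t', H t' #> (h \<otimes> g))"
    if "t \<in> I - J" "t' \<in> I - J" "t \<noteq> t'" "h \<in> parabolic J" for t t' h
    using that coset_self[OF _ hg[OF that(4)]] by (auto simp: E_def V_def coset_inc_def)
  have "P h" if "h \<in> generate M U" for h
  proof (rule generate_induct_left_mult[OF that])
    show "U \<subseteq> carrier M" using U parabolic_carrier by blast
    show "P \<one>"
      unfolding P_def using adj[OF _ t0 _ subgroup.one_closed[OF PJ]] G_carrier[OF g] by fastforce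
  next
    fix u k assume u_in: "u \<in> U \<union> m_inv M ` U" and k: "k \<in> generate M U" and "P k"
    from u_in obtain i where i: "i \<in> I - J" and u: "u \<in> parabolic (insert i J)"
    proof (rule UnE)
      assume "u \<in> U"
      thus thesis using that by (auto simp: U_def)
    next
      assume "u \<in> m_inv M ` U"
      then obtain i u' where "i \<in> I - J" "u' \<in> parabolic (insert i J)" "u = inv u'"
        unfolding U_def by blast
      thus thesis using that subgroup.m_inv_closed[OF subgroup_parabolic[of "insert i J"]] J by blast
    qed
    have kJ: "k \<in> parabolic J" using k gen_U by blast
    have "u \<in> parabolic J" using u parabolic_mono by blast
    hence ukJ: "u \<otimes> k \<in> parabolic J" using subgroup.m_closed[OF PJ _ kJ] by blast
    have "H i #> (u \<otimes> k \<otimes> g) = H i #> (k \<otimes> g)"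
      using coset_mult[OF _ _ hg[OF kJ], of i u] coset_join2[OF _ subgroup_H, of u i] i u
        G_carrier[OF g] parabolic_carrier[OF u] parabolic_carrier[OF kJ]
      by (auto simp: parabolic_def m_assoc)
    hence "E\<^sup>*\<^sup>* (i, H i #> (u \<otimes> k \<otimes> g)) (t0, H t0 #> g)" using \<open>P k\<close> i unfolding P_def by simp
    thus "P (u \<otimes> k)"
      unfolding P_def using adj[OF _ i _ ukJ] by (metis converse_rtranclp_into_rtranclp)
  qed
  hence "E\<^sup>*\<^sup>* x (t0, H t0 #> g)" if "x \<in> V" for x
    using that gen by (auto simp: V_def P_def U_def)
  moreover have "symp E\<^sup>*\<^sup>*" by (rule symp_rtranclp) (auto simp: symp_def E_def coset_inc_def)
  ultimately show ?thesis
    unfolding graph_connected_def V_def[symmetric] E_def[symmetric] by (meson rtranclp_trans sympD)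
qed (auto simp: graph_connected_def)

lemma correlation_of_automorphism:
  assumes hom: "\<phi> \<in> hom M M" and inj: "inj_on \<phi> (carrier M)" and G: "\<phi> ` G = G"
    and \<sigma>: "bij_betw \<sigma> I I" and H: "\<And>i. i \<in> I \<Longrightarrow> \<phi> ` H i = H (\<sigma> i)"
  shows "is_correlation elems coset_inc fst (\<lambda>x. (\<sigma> (fst x), \<phi> ` snd x))"
proof -
  define \<alpha> where "\<alpha> = (\<lambda>x :: 'i \<times> 'g set. (\<sigma> (fst x), \<phi> ` snd x))"
  have \<alpha>_coset: "\<alpha> (i, H i #> g) = (\<sigma> i, H (\<sigma> i) #> \<phi> g)" if "i \<in> I" "g \<in> G" for i g
    using hom_r_coset[OF hom H_carrier G_carrier] H that by (simp add: \<alpha>_def)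
  have snd_carrier: "snd x \<subseteq> carrier M" if "x \<in> elems" for x
    using that r_coset_subset_G[OF H_carrier G_carrier] by (force simp: elems_iff)
  have "\<alpha> ` elems = elems"
  proof (intro equalityI subsetI)
    fix y assume "y \<in> \<alpha> ` elems"
    thus "y \<in> elems"
      using \<alpha>_coset G bij_betwE[OF \<sigma>] by (force simp: elems_iff)
  next
    fix y assume "y \<in> elems"
    then obtain t h where "t \<in> I" "h \<in> G" "y = (t, H t #> h)" by (auto simp: elems_iff)
    moreover obtain i where "i \<in> I" "t = \<sigma> i" using \<sigma> \<open>t \<in> I\<close> by (metis bij_betw_imp_surj_on imageE)
    moreover obtain g where "g \<in> G" "h = \<phi> g" using G \<open>h \<in> G\<close> by blast
    ultimately show "y \<in> \<alpha> ` elems" using \<alpha>_coset by (force simp: elems_iff)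
  qed
  moreover have "inj_on \<alpha> elems"
  proof (rule inj_onI)
    fix x y assume "x \<in> elems" "y \<in> elems" "\<alpha> x = \<alpha> y"
    thus "x = y"
      using inj_onD[OF bij_betw_imp_inj_on[OF \<sigma>]] inj_on_image_eq_iff[OF inj snd_carrier snd_carrier]
      by (auto simp: \<alpha>_def elems_iff prod_eq_iff)
  qed
  moreover have "(fst x = fst y) = (fst (\<alpha> x) = fst (\<alpha> y))"
    and "coset_inc x y = coset_inc (\<alpha> x) (\<alpha> y)" if "x \<in> elems" "y \<in> elems" for x y
  proof -
    show "(fst x = fst y) = (fst (\<alpha> x) = fst (\<alpha> y))"
      using that bij_betw_imp_inj_on[OF \<sigma>] by (auto simp: \<alpha>_def elems_iff inj_on_eq_iff)
    moreover have "\<phi> ` (snd x \<inter> snd y) = \<phi> ` snd x \<inter> \<phi> ` snd y"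
      by (rule inj_on_image_Int[OF inj snd_carrier[OF that(1)] snd_carrier[OF that(2)]])
    ultimately show "coset_inc x y = coset_inc (\<alpha> x) (\<alpha> y)"
      by (auto simp: coset_inc_def \<alpha>_def)
  qed
  ultimately show ?thesis by (simp add: is_correlation_def bij_betw_def \<alpha>_def)
qed

context
  assumes helly: "helly_cosets M G I H"
begin

lemma flag_common_point:
  assumes F: "is_flag elems coset_inc F"
  shows "\<exists>g\<in>G. \<forall>x\<in>F. g \<in> snd x"
proof -
  have "\<forall>x\<in>F. \<forall>y\<in>F. snd x \<inter> snd y \<noteq> {}"
  proof (intro ballI)
    fix x y assume xy: "x \<in> F" "y \<in> F"
    show "snd x \<inter> snd y \<noteq> {}"
    proof (cases "x = y")
      case True
      obtain i h where "i \<in> I" "h \<in> G" "x = (i, H i #> h)" by (rule flag_elemE[OF F xy(1)])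
      thus ?thesis using True coset_self by auto
    qed (use F xy in \<open>auto simp: is_flag_def coset_inc_def\<close>)
  qed
  moreover have "F \<subseteq> elems" using F by (simp add: is_flag_def)
  ultimately show ?thesis using helly finite_flag[OF F] unfolding helly_cosets_def by blast
qed

lemma flag_eq_std_flagE:
  assumes F: "is_flag elems coset_inc F"
  obtains g where "g \<in> G" "F = std_flag (fst ` F) g"
  using flag_common_point[OF F] flag_eq_std_flag[OF F] by blast

lemma geometry: "is_geometry elems coset_inc fst I"
  unfolding is_geometry_def
proof (intro allI impI)
  fix F assume F: "is_flag elems coset_inc F"
  obtain g where g: "g \<in> G" "F = std_flag (fst ` F) g" by (rule flag_eq_std_flagE[OF F])
  have "is_chamber elems coset_inc fst I (std_flag I g)"
    using std_flag_is_flag[OF _ g(1)] by (simp add: is_chamber_def)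
  moreover have "F \<subseteq> std_flag I g" using g(2) flag_types[OF F] by (auto simp: std_flag_def)
  ultimately show "\<exists>C. is_chamber elems coset_inc fst I C \<and> F \<subseteq> C" by blast
qed

lemma flag_transitive: "flag_transitive M G I H"
  unfolding flag_transitive_def
proof (intro allI impI, elim conjE)
  fix J F1 F2
  assume F1: "is_flag elems coset_inc F1" "fst ` F1 = J"
    and F2: "is_flag elems coset_inc F2" "fst ` F2 = J"
  obtain g1 where g1: "g1 \<in> G" "F1 = std_flag J g1" using flag_eq_std_flagE[OF F1(1)] F1(2) by blast
  obtain g2 where g2: "g2 \<in> G" "F2 = std_flag J g2" using flag_eq_std_flagE[OF F2(1)] F2(2) by blast
  define h where "h = inv g1 \<otimes> g2"
  have h: "h \<in> G" unfolding h_def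
    using g1 g2 subgroup.m_closed[OF subgroup_G] subgroup.m_inv_closed[OF subgroup_G] by blast
  have "g1 \<otimes> h = g2" unfolding h_def using G_carrier g1(1) g2(1) by (simp add: m_assoc[symmetric])
  hence "H i #> g1 #> h = H i #> g2" if "i \<in> J" for i
    using coset_mult[OF _ g1(1) h] that flag_types F1 by blast
  hence "coset_act M h ` std_flag J g1 = std_flag J g2"
    by (force simp: std_flag_def coset_act_def image_image)
  thus "\<exists>h\<in>G. coset_act M h ` F1 = F2" using h g1 g2 by blast
qed

lemma residue_std_flag:
  assumes J: "J \<subseteq> I" and g: "g \<in> G"
  shows "residue elems coset_inc (std_flag J g)
    = {(t, H t #> (h \<otimes> g)) | t h. t \<in> I - J \<and> h \<in> parabolic J}"
proof (intro equalityI subsetI)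
  fix x assume x: "x \<in> residue elems coset_inc (std_flag J g)"
  hence xE: "x \<in> elems" and xinc: "\<forall>y\<in>std_flag J g. coset_inc x y"
    by (auto simp: residue_def)
  hence "is_flag elems coset_inc (insert x (std_flag J g))"
    using std_flag_is_flag[OF J g] by (auto simp: is_flag_def coset_inc_def)
  then obtain k where k: "k \<in> G" "k \<in> snd x" "\<forall>j\<in>J. k \<in> H j #> g"
    using flag_common_point by (fastforce simp: std_flag_def)
  obtain t k' where t: "t \<in> I" "k' \<in> G" "x = (t, H t #> k')" using xE unfolding elems_iff by blast
  have "t \<notin> J" using xinc t(3) by (auto simp: std_flag_def coset_inc_def)
  have x_eq: "x = (t, H t #> k)" using t k(2) coset_repr by simp
  define h where "h = k \<otimes> inv g"
  have "h \<in> H j" if "j \<in> J" for j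
    using subgroup.rcos_module_imp[OF subgroup_H is_group G_carrier[OF g]] k(3) that J
    unfolding h_def by blast
  moreover have "h \<in> G" unfolding h_def
    using k(1) g subgroup.m_closed[OF subgroup_G] subgroup.m_inv_closed[OF subgroup_G] by blast
  moreover have "h \<otimes> g = k" unfolding h_def using G_carrier k(1) g by (simp add: m_assoc)
  ultimately show "x \<in> {(t, H t #> (h \<otimes> g)) | t h. t \<in> I - J \<and> h \<in> parabolic J}"
    using x_eq t(1) \<open>t \<notin> J\<close> by (auto simp: parabolic_def)
next
  fix x assume "x \<in> {(t, H t #> (h \<otimes> g)) | t h. t \<in> I - J \<and> h \<in> parabolic J}"
  then obtain t h where th: "t \<in> I - J" "h \<in> parabolic J" "x = (t, H t #> (h \<otimes> g))" by blast
  have hg: "h \<otimes> g \<in> G" using th(2) g subgroup.m_closed[OF subgroup_G] by (auto simp: parabolic_def)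
  have "h \<otimes> g \<in> H j #> g" if "j \<in> J" for j
    using rcosI[OF _ H_carrier G_carrier[OF g]] th(2) that J by (auto simp: parabolic_def)
  hence "coset_inc x y" if "y \<in> std_flag J g" for y
    using that th coset_self[OF _ hg] by (auto simp: std_flag_def coset_inc_def) blast
  thus "x \<in> residue elems coset_inc (std_flag J g)"
    using th hg by (auto simp: residue_def elems_iff std_flag_def)
qed

lemma residually_connected:
  assumes gen: "\<And>J. J \<subseteq> I \<Longrightarrow> 2 \<le> card (I - J) \<Longrightarrow>
    parabolic J \<subseteq> generate M (\<Union>i\<in>I - J. parabolic (insert i J))"
  shows "residually_connected elems coset_inc fst I"
  unfolding residually_connected_def
proof (intro allI impI, elim conjE)
  fix F assume F: "is_flag elems coset_inc F" and card: "2 \<le> card (I - fst ` F)"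
  obtain g where g: "g \<in> G" "F = std_flag (fst ` F) g" by (rule flag_eq_std_flagE[OF F])
  show "graph_connected (residue elems coset_inc F) coset_inc"
    using residue_std_flag[OF flag_types[OF F] g(1)] g
      connected_std_residue[OF flag_types[OF F] g(1) gen[OF flag_types[OF F] card]]
    by simp
qed

end

end

lemma helly_cosets_image:
  assumes M: "group M" and h: "h \<in> hom M M'" "inj_on h (carrier M)"
    and G: "G \<subseteq> carrier M" and H: "\<And>i. i \<in> I \<Longrightarrow> H i \<subseteq> carrier M"
    and helly: "helly_cosets M G I H"
  shows "helly_cosets M' (h ` G) I (\<lambda>i. h ` H i)"
  unfolding helly_cosets_def
proof (intro allI impI)
  fix F assume F: "F \<subseteq> coset_elems M' (h ` G) I (\<lambda>i. h ` H i)" and fin: "finite F"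
    and meet: "\<forall>x\<in>F. \<forall>y\<in>F. snd x \<inter> snd y \<noteq> {}"
  have "\<exists>g\<in>G. fst x \<in> I \<and> snd x = h ` (H (fst x) #>\<^bsub>M\<^esub> g)" if "x \<in> F" for x
  proof -
    have "x \<in> coset_elems M' (h ` G) I (\<lambda>i. h ` H i)" using that F by blast
    then obtain i g where "i \<in> I" "g \<in> G" "x = (i, h ` H i #>\<^bsub>M'\<^esub> h g)"
      by (auto simp: coset_elems_def)
    moreover have "h ` (H i #>\<^bsub>M\<^esub> g) = h ` H i #>\<^bsub>M'\<^esub> h g"
      using hom_r_coset[OF h(1) H] \<open>i \<in> I\<close> \<open>g \<in> G\<close> G by blast
    ultimately show ?thesis by auto
  qed
  then obtain g where g: "\<And>x. x \<in> F \<Longrightarrow> g x \<in> G \<and> fst x \<in> I \<and> snd x = h ` (H (fst x) #>\<^bsub>M\<^esub> g x)"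
    by metis
  define F' where "F' = (\<lambda>x. (fst x, H (fst x) #>\<^bsub>M\<^esub> g x)) ` F"
  have coset_carrier: "H (fst x) #>\<^bsub>M\<^esub> g x \<subseteq> carrier M" if "x \<in> F" for x
    using g[OF that] G H monoid.r_coset_subset_G[OF group.is_monoid[OF M]] by blast
  have "F' \<subseteq> coset_elems M G I H" using g by (auto simp: F'_def coset_elems_def)
  moreover have "snd x' \<inter> snd y' \<noteq> {}" if x': "x' \<in> F'" and y': "y' \<in> F'" for x' y'
  proof -
    obtain x y where xy: "x \<in> F" "y \<in> F"
      "x' = (fst x, H (fst x) #>\<^bsub>M\<^esub> g x)" "y' = (fst y, H (fst y) #>\<^bsub>M\<^esub> g y)"
      using x' y' unfolding F'_def by blast
    have "h ` (snd x' \<inter> snd y') = snd x \<inter> snd y"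
      using g xy inj_on_image_Int[OF h(2) coset_carrier[OF xy(1)] coset_carrier[OF xy(2)]] by simp
    thus ?thesis using meet xy(1,2) by force
  qed
  ultimately obtain y where y: "y \<in> G" "\<forall>x\<in>F'. y \<in> snd x"
    using helly fin unfolding helly_cosets_def F'_def by (meson finite_imageI)
  hence "\<forall>x\<in>F. h y \<in> snd x" using g by (auto simp: F'_def)
  thus "\<exists>g\<in>h ` G. \<forall>x\<in>F. g \<in> snd x" using y(1) by blast
qed

section \<open>Free groups\<close>

definition letter_cancel :: "'a \<times> bool \<Rightarrow> 'a \<times> bool \<Rightarrow> bool" where
  "letter_cancel a b \<longleftrightarrow> fst a = fst b \<and> snd a \<noteq> snd b"

fun freely_reduced :: "('a \<times> bool) list \<Rightarrow> bool" where
  "freely_reduced [] = True"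
| "freely_reduced [a] = True"
| "freely_reduced (a # b # w) = (\<not> letter_cancel a b \<and> freely_reduced (b # w))"

fun reduce_cons :: "'a \<times> bool \<Rightarrow> ('a \<times> bool) list \<Rightarrow> ('a \<times> bool) list" where
  "reduce_cons a [] = [a]"
| "reduce_cons a (b # w) = (if letter_cancel a b then w else a # b # w)"

definition free_reduce :: "('a \<times> bool) list \<Rightarrow> ('a \<times> bool) list" where
  "free_reduce w = foldr reduce_cons w []"

definition free_grp :: "'a set \<Rightarrow> ('a \<times> bool) list monoid" where
  "free_grp A = \<lparr> carrier = {w. freely_reduced w \<and> (\<forall>a \<in> set w. fst a \<in> A)},
                  monoid.mult = (\<lambda>u v. free_reduce (u @ v)),
                  monoid.one = [] \<rparr>"

definition letter_inv :: "'a \<times> bool \<Rightarrow> 'a \<times> bool" where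
  "letter_inv a = (fst a, \<not> snd a)"

definition word_inv :: "('a \<times> bool) list \<Rightarrow> ('a \<times> bool) list" where
  "word_inv w = rev (map letter_inv w)"

lemma FreeGrp_eq_free_grp: "FreeGrp n = free_grp {..<n}"
proof -
  have c: "cancels = letter_cancel" by (auto simp: fun_eq_iff cancels_def letter_cancel_def)
  have r: "reduced w = freely_reduced w" for w by (induction w rule: reduced.induct) (auto simp: c)
  have "red_cons a w = reduce_cons a w" for a w by (cases w) (auto simp: c)
  hence "red_cons = reduce_cons" by (simp add: fun_eq_iff)
  hence "reduce = free_reduce" unfolding reduce_def free_reduce_def by (rule arg_cong)
  thus ?thesis unfolding FreeGrp_def free_grp_def by (simp add: r)
qed

lemma letter_cancel_inv [simp]: "letter_cancel a (letter_inv a)" "letter_cancel (letter_inv a) a"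
  by (auto simp: letter_cancel_def letter_inv_def)

lemma letter_cancel_imp_eq_inv: "letter_cancel a b \<Longrightarrow> b = letter_inv a"
  by (cases a; cases b) (auto simp: letter_cancel_def letter_inv_def)

lemma letter_inv_inv [simp]: "letter_inv (letter_inv a) = a"
  by (simp add: letter_inv_def)

lemma fst_letter_inv [simp]: "fst (letter_inv a) = fst a"
  by (simp add: letter_inv_def)

lemma freely_reduced_Cons:
  "freely_reduced (a # w) \<longleftrightarrow> freely_reduced w \<and> (w \<noteq> [] \<longrightarrow> \<not> letter_cancel a (hd w))"
  by (cases w) auto

lemma freely_reduced_append:
  "freely_reduced (u @ v) \<longleftrightarrow> freely_reduced u \<and> freely_reduced v
     \<and> (u \<noteq> [] \<longrightarrow> v \<noteq> [] \<longrightarrow> \<not> letter_cancel (last u) (hd v))"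
  by (induction u rule: freely_reduced.induct) (auto simp: freely_reduced_Cons)

lemma freely_reduced_reduce_cons: "freely_reduced w \<Longrightarrow> freely_reduced (reduce_cons a w)"
  by (cases w) (auto simp: freely_reduced_Cons)

lemma reduce_cons_reduced: "freely_reduced (a # w) \<Longrightarrow> reduce_cons a w = a # w"
  by (cases w) auto

lemma freely_reduced_free_reduce: "freely_reduced (free_reduce w)"
  unfolding free_reduce_def by (induction w) (auto intro: freely_reduced_reduce_cons)

lemma free_reduce_reduced: "freely_reduced w \<Longrightarrow> free_reduce w = w"
  unfolding free_reduce_def by (induction w) (auto simp: freely_reduced_Cons reduce_cons_reduced)

lemma set_reduce_cons: "set (reduce_cons a w) \<subseteq> insert a (set w)"
  by (cases w) auto

lemma set_free_reduce: "set (free_reduce w) \<subseteq> set w"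
  unfolding free_reduce_def by (induction w) (use set_reduce_cons in fastforce)+

lemma reduce_cons_cancel:
  assumes "letter_cancel a b" "freely_reduced y"
  shows "reduce_cons a (reduce_cons b y) = y"
proof (cases y)
  case (Cons c y')
  show ?thesis
  proof (cases "letter_cancel b c")
    case True
    hence "c = a" using assms(1) by (cases a; cases b; cases c) (auto simp: letter_cancel_def)
    thus ?thesis using Cons True assms(2) by (cases y') auto
  qed (use Cons assms in auto)
qed (use assms in auto)

lemma foldr_reduce_cons_free_reduce:
  "freely_reduced x \<Longrightarrow> foldr reduce_cons u x = foldr reduce_cons (free_reduce u) x"
proof (induction u)
  case (Cons a u)
  have "freely_reduced (foldr reduce_cons v x)" for v
    using Cons.prems by (induction v) (auto intro: freely_reduced_reduce_cons)
  hence "reduce_cons a (foldr reduce_cons v x) = foldr reduce_cons (reduce_cons a v) x"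
    if "freely_reduced v" for v
    using that Cons.prems by (cases v) (auto simp: reduce_cons_cancel)
  from this[OF freely_reduced_free_reduce[of u]] show ?case
    using Cons by (simp add: free_reduce_def)
qed (simp add: free_reduce_def)

lemma free_reduce_append: "free_reduce (u @ v) = foldr reduce_cons u (free_reduce v)"
  by (simp add: free_reduce_def)

lemma free_reduce_append_reduce_left: "free_reduce (free_reduce u @ v) = free_reduce (u @ v)"
  by (simp add: free_reduce_append
      foldr_reduce_cons_free_reduce[OF freely_reduced_free_reduce, symmetric])

lemma free_reduce_append_reduce_right: "free_reduce (u @ free_reduce v) = free_reduce (u @ v)"
  by (simp add: free_reduce_append free_reduce_reduced[OF freely_reduced_free_reduce])

lemma foldr_reduce_cons_word_inv:
  "freely_reduced (word_inv w @ x) \<Longrightarrow> foldr reduce_cons w (word_inv w @ x) = x"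
proof (induction w arbitrary: x)
  case (Cons a w)
  have "word_inv (a # w) @ x = word_inv w @ (letter_inv a # x)" by (simp add: word_inv_def)
  hence "foldr reduce_cons w (word_inv (a # w) @ x) = letter_inv a # x" using Cons by simp
  moreover have "freely_reduced x" using Cons.prems by (simp add: freely_reduced_append)
  ultimately show ?case by (cases x) auto
qed (simp add: word_inv_def)

lemma freely_reduced_word_inv: "freely_reduced w \<Longrightarrow> freely_reduced (word_inv w)"
  unfolding word_inv_def
  by (induction w rule: freely_reduced.induct)
     (auto simp: freely_reduced_append letter_cancel_def letter_inv_def)

lemma word_inv_inv [simp]: "word_inv (word_inv w) = w"
  by (simp add: word_inv_def rev_map comp_def)

lemma set_word_inv: "set (word_inv w) = letter_inv ` set w"
  by (simp add: word_inv_def)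

lemma free_reduce_word_inv_append: "freely_reduced w \<Longrightarrow> free_reduce (word_inv w @ w) = []"
  using foldr_reduce_cons_word_inv[of "word_inv w" "[]"]
  by (simp add: free_reduce_append free_reduce_reduced freely_reduced_word_inv)

lemma carrier_free_grp: "carrier (free_grp A) = {w. freely_reduced w \<and> (\<forall>a \<in> set w. fst a \<in> A)}"
  by (simp add: free_grp_def)

lemma mult_free_grp: "x \<otimes>\<^bsub>free_grp A\<^esub> y = free_reduce (x @ y)"
  by (simp add: free_grp_def)

lemma one_free_grp: "\<one>\<^bsub>free_grp A\<^esub> = []"
  by (simp add: free_grp_def)

lemma group_free_grp: "group (free_grp A)"
proof (rule groupI)
  fix x y z
  assume x: "x \<in> carrier (free_grp A)" and y: "y \<in> carrier (free_grp A)"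
  show "x \<otimes>\<^bsub>free_grp A\<^esub> y \<in> carrier (free_grp A)"
    using x y set_free_reduce[of "x @ y"] by (auto simp: free_grp_def freely_reduced_free_reduce)
  show "x \<otimes>\<^bsub>free_grp A\<^esub> y \<otimes>\<^bsub>free_grp A\<^esub> z = x \<otimes>\<^bsub>free_grp A\<^esub> (y \<otimes>\<^bsub>free_grp A\<^esub> z)"
    by (simp add: mult_free_grp free_reduce_append_reduce_left free_reduce_append_reduce_right)
next
  fix x assume x: "x \<in> carrier (free_grp A)"
  thus "\<one>\<^bsub>free_grp A\<^esub> \<otimes>\<^bsub>free_grp A\<^esub> x = x"
    by (simp add: free_grp_def free_reduce_reduced)
  show "\<exists>y\<in>carrier (free_grp A). y \<otimes>\<^bsub>free_grp A\<^esub> x = \<one>\<^bsub>free_grp A\<^esub>"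
    using x by (intro bexI[of _ "word_inv x"])
      (auto simp: free_grp_def free_reduce_word_inv_append freely_reduced_word_inv set_word_inv)
qed (simp add: one_free_grp carrier_free_grp)

lemma inv_free_grp: "x \<in> carrier (free_grp A) \<Longrightarrow> inv\<^bsub>free_grp A\<^esub> x = word_inv x"
  by (rule group.inv_equality[OF group_free_grp])
     (auto simp: free_grp_def free_reduce_word_inv_append freely_reduced_word_inv set_word_inv)

definition letter_val :: "('b, 'm) monoid_scheme \<Rightarrow> ('a \<Rightarrow> 'b) \<Rightarrow> 'a \<times> bool \<Rightarrow> 'b" where
  "letter_val M f a = (if snd a then inv\<^bsub>M\<^esub> (f (fst a)) else f (fst a))"

definition free_lift :: "('b, 'm) monoid_scheme \<Rightarrow> ('a \<Rightarrow> 'b) \<Rightarrow> ('a \<times> bool) list \<Rightarrow> 'b" where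
  "free_lift M f w = foldr (\<lambda>a acc. letter_val M f a \<otimes>\<^bsub>M\<^esub> acc) w \<one>\<^bsub>M\<^esub>"

lemma free_lift_Nil [simp]: "free_lift M f [] = \<one>\<^bsub>M\<^esub>"
  by (simp add: free_lift_def)

lemma free_lift_Cons [simp]: "free_lift M f (a # w) = letter_val M f a \<otimes>\<^bsub>M\<^esub> free_lift M f w"
  by (simp add: free_lift_def)

context
  fixes M :: "('b, 'm) monoid_scheme" and f :: "'a \<Rightarrow> 'b" and A :: "'a set"
  assumes grp: "group M" and f_carrier: "\<And>a. a \<in> A \<Longrightarrow> f a \<in> carrier M"
begin

interpretation M: group M by (rule grp)

lemma letter_val_carrier: "fst a \<in> A \<Longrightarrow> letter_val M f a \<in> carrier M"
  by (auto simp: letter_val_def f_carrier)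

lemma free_lift_carrier: "\<forall>a\<in>set w. fst a \<in> A \<Longrightarrow> free_lift M f w \<in> carrier M"
  by (induction w) (auto simp: letter_val_carrier)

lemma free_lift_append:
  "\<forall>a\<in>set (u @ v). fst a \<in> A \<Longrightarrow> free_lift M f (u @ v) = free_lift M f u \<otimes>\<^bsub>M\<^esub> free_lift M f v"
  by (induction u) (auto simp: letter_val_carrier free_lift_carrier M.m_assoc)

lemma free_lift_reduce_cons:
  assumes "\<forall>b\<in>set (a # w). fst b \<in> A"
  shows "free_lift M f (reduce_cons a w) = letter_val M f a \<otimes>\<^bsub>M\<^esub> free_lift M f w"
proof (cases w)
  case (Cons b w')
  show ?thesis
  proof (cases "letter_cancel a b")
    case True
    hence "b = letter_inv a" by (rule letter_cancel_imp_eq_inv)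
    hence "letter_val M f a \<otimes>\<^bsub>M\<^esub> letter_val M f b = \<one>\<^bsub>M\<^esub>"
      using assms by (auto simp: letter_val_def letter_inv_def f_carrier)
    thus ?thesis using assms Cons True
      by (simp add: M.m_assoc[symmetric] letter_val_carrier free_lift_carrier)
  qed (use Cons in simp)
qed simp

lemma free_lift_free_reduce: "\<forall>b\<in>set w. fst b \<in> A \<Longrightarrow> free_lift M f (free_reduce w) = free_lift M f w"
proof (induction w)
  case (Cons a w)
  have "\<forall>b\<in>set (a # free_reduce w). fst b \<in> A" using Cons.prems set_free_reduce by fastforce
  thus ?case using Cons by (simp add: free_reduce_def free_lift_reduce_cons)
qed (simp add: free_reduce_def)

lemma free_lift_hom: "free_lift M f \<in> hom (free_grp A) M"
proof (rule homI)
  fix x assume "x \<in> carrier (free_grp A)"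
  thus "free_lift M f x \<in> carrier M" by (auto simp: carrier_free_grp free_lift_carrier)
next
  fix x y assume "x \<in> carrier (free_grp A)" "y \<in> carrier (free_grp A)"
  hence "\<forall>b\<in>set (x @ y). fst b \<in> A" by (auto simp: carrier_free_grp)
  thus "free_lift M f (x \<otimes>\<^bsub>free_grp A\<^esub> y) = free_lift M f x \<otimes>\<^bsub>M\<^esub> free_lift M f y"
    by (simp add: mult_free_grp free_lift_free_reduce free_lift_append)
qed

end

definition free_gens :: "'a set \<Rightarrow> ('a \<times> bool) list set" where
  "free_gens B = {[(b, False)] | b. b \<in> B}"

definition letter_subgroup :: "'a set \<Rightarrow> 'a set \<Rightarrow> ('a \<times> bool) list set" where
  "letter_subgroup A B = {w \<in> carrier (free_grp A). \<forall>l\<in>set w. fst l \<in> B}"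

lemma letter_subgroup_subset: "letter_subgroup A B \<subseteq> carrier (free_grp A)"
  by (auto simp: letter_subgroup_def)

lemma letter_subgroup_carrier: "letter_subgroup A A = carrier (free_grp A)"
  by (auto simp: letter_subgroup_def carrier_free_grp)

lemma INT_letter_subgroup:
  "J \<noteq> {} \<Longrightarrow> (\<Inter>j\<in>J. letter_subgroup A (A - {j})) = letter_subgroup A (A - J)"
  by (auto simp: letter_subgroup_def carrier_free_grp)

lemma subgroup_letter_subgroup: "subgroup (letter_subgroup A B) (free_grp A)"
proof (rule subgroup.intro)
  fix x y assume "x \<in> letter_subgroup A B" "y \<in> letter_subgroup A B"
  thus "x \<otimes>\<^bsub>free_grp A\<^esub> y \<in> letter_subgroup A B" using set_free_reduce[of "x @ y"]
    by (auto simp: letter_subgroup_def mult_free_grp carrier_free_grp freely_reduced_free_reduce)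
next
  fix x assume "x \<in> letter_subgroup A B"
  thus "inv\<^bsub>free_grp A\<^esub> x \<in> letter_subgroup A B"
    by (auto simp: letter_subgroup_def inv_free_grp carrier_free_grp freely_reduced_word_inv set_word_inv)
qed (auto simp: letter_subgroup_def one_free_grp carrier_free_grp)

lemma inv_free_gen: "a \<in> A \<Longrightarrow> inv\<^bsub>free_grp A\<^esub> [(a, False)] = [(a, True)]"
  by (simp add: inv_free_grp carrier_free_grp word_inv_def letter_inv_def)

lemma generate_free_gens:
  assumes B: "B \<subseteq> A"
  shows "generate (free_grp A) (free_gens B) = letter_subgroup A B"
proof
  interpret group "free_grp A" by (rule group_free_grp)
  show "generate (free_grp A) (free_gens B) \<subseteq> letter_subgroup A B"
    by (rule generate_subgroup_incl[OF _ subgroup_letter_subgroup])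
       (use B in \<open>auto simp: free_gens_def letter_subgroup_def carrier_free_grp\<close>)
  show "letter_subgroup A B \<subseteq> generate (free_grp A) (free_gens B)"
  proof
    fix w assume "w \<in> letter_subgroup A B"
    hence "freely_reduced w" "\<forall>l\<in>set w. fst l \<in> B" by (auto simp: letter_subgroup_def carrier_free_grp)
    thus "w \<in> generate (free_grp A) (free_gens B)"
    proof (induction w)
      case Nil
      show ?case using generate.one[of "free_grp A"] by (simp add: one_free_grp)
    next
      case (Cons l w)
      obtain a e where l: "l = (a, e)" by force
      have a: "a \<in> B" "[(a, False)] \<in> free_gens B" using Cons.prems l by (auto simp: free_gens_def)
      have "[l] \<in> generate (free_grp A) (free_gens B)"
        using generate.incl[OF a(2)] generate.inv[OF a(2), of "free_grp A"] inv_free_gen[of a A]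
          a(1) B l
        by (cases e) auto
      moreover have "w \<in> generate (free_grp A) (free_gens B)"
        using Cons by (simp add: freely_reduced_Cons)
      ultimately have "[l] \<otimes>\<^bsub>free_grp A\<^esub> w \<in> generate (free_grp A) (free_gens B)"
        by (rule generate.eng)
      thus ?case using Cons.prems by (simp add: mult_free_grp free_reduce_reduced)
    qed
  qed
qed

lemma free_grp_hom_eqI:
  assumes M: "group M" and h1: "h1 \<in> hom (free_grp A) M" and h2: "h2 \<in> hom (free_grp A) M"
    and eq: "\<And>a. a \<in> A \<Longrightarrow> h1 [(a, False)] = h2 [(a, False)]"
    and w: "w \<in> carrier (free_grp A)"
  shows "h1 w = h2 w"
proof -
  interpret H1: group_hom "free_grp A" M h1 by (simp add: group_hom_def group_hom_axioms_def group_free_grp M h1)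
  interpret H2: group_hom "free_grp A" M h2 by (simp add: group_hom_def group_hom_axioms_def group_free_grp M h2)
  have gens: "free_gens A \<subseteq> carrier (free_grp A)" by (auto simp: free_gens_def carrier_free_grp)
  have "w \<in> generate (free_grp A) (free_gens A)"
    using w generate_free_gens[of A A] by (simp add: letter_subgroup_carrier)
  thus ?thesis
  proof induction
    case (incl h) thus ?case using eq by (auto simp: free_gens_def)
  next
    case (inv h) thus ?case using eq gens by (auto simp: free_gens_def)
  next
    case (eng x y)
    hence "x \<in> carrier (free_grp A)" "y \<in> carrier (free_grp A)"
      using group.generate_incl[OF group_free_grp gens] by blast+
    thus ?case using eng.IH by simp
  qed simp
qed

section \<open>Cosets of the subgroups omitting one letter\<close>

abbreviation omit_subgroup :: "'a set \<Rightarrow> 'a \<Rightarrow> ('a \<times> bool) list set" where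
  "omit_subgroup A a \<equiv> letter_subgroup A (A - {a})"

lemma takeWhile_dropWhile_carrier:
  assumes "x \<in> carrier (free_grp A)"
  shows "takeWhile P x \<in> carrier (free_grp A)" "dropWhile P x \<in> carrier (free_grp A)"
proof -
  have "freely_reduced (takeWhile P x @ dropWhile P x)" using assms by (simp add: carrier_free_grp)
  hence "freely_reduced (takeWhile P x)" "freely_reduced (dropWhile P x)"
    unfolding freely_reduced_append by blast+
  thus "takeWhile P x \<in> carrier (free_grp A)" "dropWhile P x \<in> carrier (free_grp A)"
    using assms by (auto simp: carrier_free_grp dest: set_takeWhileD set_dropWhileD)
qed

text \<open>Deleting from \<open>x\<close> the longest prefix avoiding \<open>a\<close> gives a canonical representative
  of the coset of \<open>x\<close>; it is empty or starts with \<open>a\<^sup>\<pm>\<^sup>1\<close>, so nothing cancels when an element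
  of \<open>omit_subgroup A a\<close> is multiplied onto it.\<close>

lemma omit_subgroup_coset_dropWhile:
  assumes x: "x \<in> carrier (free_grp A)"
  shows "omit_subgroup A a #>\<^bsub>free_grp A\<^esub> x
       = omit_subgroup A a #>\<^bsub>free_grp A\<^esub> dropWhile (\<lambda>l. fst l \<noteq> a) x"
proof -
  interpret group "free_grp A" by (rule group_free_grp)
  define p where "p = takeWhile (\<lambda>l. fst l \<noteq> a) x"
  define r where "r = dropWhile (\<lambda>l. fst l \<noteq> a) x"
  have p: "p \<in> carrier (free_grp A)" and r: "r \<in> carrier (free_grp A)"
    using takeWhile_dropWhile_carrier[OF x] by (simp_all add: p_def r_def)
  have "x = p \<otimes>\<^bsub>free_grp A\<^esub> r"
    using x by (simp add: p_def r_def mult_free_grp free_reduce_reduced carrier_free_grp)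
  hence "omit_subgroup A a #>\<^bsub>free_grp A\<^esub> x
      = omit_subgroup A a #>\<^bsub>free_grp A\<^esub> p #>\<^bsub>free_grp A\<^esub> r"
    using coset_mult_assoc[OF letter_subgroup_subset p r] by simp
  also have "p \<in> omit_subgroup A a"
    using p by (auto simp: p_def letter_subgroup_def carrier_free_grp dest: set_takeWhileD)
  hence "omit_subgroup A a #>\<^bsub>free_grp A\<^esub> p = omit_subgroup A a"
    by (rule coset_join2[OF p subgroup_letter_subgroup])
  finally show ?thesis by (simp add: r_def)
qed

lemma omit_subgroup_coset_append:
  assumes r: "r \<in> carrier (free_grp A)" "r = [] \<or> fst (hd r) = a"
  shows "y \<in> omit_subgroup A a #>\<^bsub>free_grp A\<^esub> r \<longleftrightarrow> (\<exists>w \<in> omit_subgroup A a. y = w @ r)"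
proof -
  have "w \<otimes>\<^bsub>free_grp A\<^esub> r = w @ r" if "w \<in> omit_subgroup A a" for w
  proof -
    have "freely_reduced w" "freely_reduced r" "\<forall>l\<in>set w. fst l \<noteq> a"
      using that r by (auto simp: letter_subgroup_def carrier_free_grp)
    hence "freely_reduced (w @ r)" using r by (auto simp: freely_reduced_append letter_cancel_def)
    thus ?thesis by (simp add: mult_free_grp free_reduce_reduced)
  qed
  thus ?thesis by (auto simp: r_coset_def)
qed

lemma omit_subgroup_cosets_nested:
  assumes r: "r \<in> carrier (free_grp A)" "r = [] \<or> fst (hd r) = a"
    and r': "r' \<in> carrier (free_grp A)" "r' = [] \<or> fst (hd r') = a'"
    and meet: "(omit_subgroup A a #>\<^bsub>free_grp A\<^esub> r) \<inter> (omit_subgroup A a' #>\<^bsub>free_grp A\<^esub> r') \<noteq> {}"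
    and len: "length r \<le> length r'"
  shows "r' \<in> omit_subgroup A a #>\<^bsub>free_grp A\<^esub> r"
proof -
  obtain y where "y \<in> omit_subgroup A a #>\<^bsub>free_grp A\<^esub> r" "y \<in> omit_subgroup A a' #>\<^bsub>free_grp A\<^esub> r'"
    using meet by blast
  then obtain w w' where w: "w \<in> omit_subgroup A a" "w' \<in> omit_subgroup A a'" "w @ r = w' @ r'"
    unfolding omit_subgroup_coset_append[OF r] omit_subgroup_coset_append[OF r'] by blast
  obtain u where u: "r' = u @ r" "w = w' @ u"
  proof -
    have "\<exists>us. w = w' @ us \<and> us @ r = r' \<or> w @ us = w' \<and> r = us @ r'"
      using w(3) by (simp add: append_eq_append_conv2)
    then obtain us where "w = w' @ us \<and> us @ r = r' \<or> w @ us = w' \<and> r = us @ r'" by blast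
    thus thesis
    proof
      assume "w = w' @ us \<and> us @ r = r'"
      thus thesis using that[of us] by simp
    next
      assume *: "w @ us = w' \<and> r = us @ r'"
      hence "us = []" using len by simp
      thus thesis using that[of "[]"] * by simp
    qed
  qed
  have "freely_reduced (u @ r)" "\<forall>l\<in>set u. fst l \<in> A"
    using r' u(1) by (auto simp: carrier_free_grp)
  moreover have "\<forall>l\<in>set u. fst l \<noteq> a" using w(1) u(2) by (simp add: letter_subgroup_def)
  ultimately have "u \<in> omit_subgroup A a"
    unfolding freely_reduced_append by (simp add: letter_subgroup_def carrier_free_grp)
  thus ?thesis using omit_subgroup_coset_append[OF r] u by blast
qed

theorem helly_free_grp:
  "helly_cosets (free_grp A) (carrier (free_grp A)) A (omit_subgroup A)"
  unfolding helly_cosets_def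
proof (intro allI impI)
  fix F assume F: "F \<subseteq> coset_elems (free_grp A) (carrier (free_grp A)) A (omit_subgroup A)"
    and fin: "finite F" and meet: "\<forall>x\<in>F. \<forall>y\<in>F. snd x \<inter> snd y \<noteq> {}"
  show "\<exists>g\<in>carrier (free_grp A). \<forall>x\<in>F. g \<in> snd x"
  proof (cases "F = {}")
    case False
    have "\<exists>g\<in>carrier (free_grp A). snd x = omit_subgroup A (fst x) #>\<^bsub>free_grp A\<^esub> g" if "x \<in> F" for x
    proof -
      have "x \<in> coset_elems (free_grp A) (carrier (free_grp A)) A (omit_subgroup A)" using that F by blast
      thus ?thesis by (auto simp: coset_elems_def)
    qed
    then obtain g where g: "\<And>x. x \<in> F \<Longrightarrow> g x \<in> carrier (free_grp A)
        \<and> snd x = omit_subgroup A (fst x) #>\<^bsub>free_grp A\<^esub> g x"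
      by metis
    define r where "r x = dropWhile (\<lambda>l. fst l \<noteq> fst x) (g x)" for x
    have r: "r x \<in> carrier (free_grp A)" "r x = [] \<or> fst (hd (r x)) = fst x"
      and snd_r: "snd x = omit_subgroup A (fst x) #>\<^bsub>free_grp A\<^esub> r x" if "x \<in> F" for x
    proof -
      show "r x \<in> carrier (free_grp A)"
        unfolding r_def using g[OF that] by (blast intro: takeWhile_dropWhile_carrier(2))
      show "r x = [] \<or> fst (hd (r x)) = fst x"
        using hd_dropWhile[of "\<lambda>l. fst l \<noteq> fst x" "g x"] by (auto simp: r_def)
      show "snd x = omit_subgroup A (fst x) #>\<^bsub>free_grp A\<^esub> r x"
        using g[OF that] omit_subgroup_coset_dropWhile[of "g x" A "fst x"] by (simp add: r_def)
    qed
    obtain m where m: "m \<in> F" "length (r m) = Max ((\<lambda>x. length (r x)) ` F)"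
    proof -
      have "Max ((\<lambda>x. length (r x)) ` F) \<in> (\<lambda>x. length (r x)) ` F" using fin False by simp
      thus thesis using that by (metis imageE)
    qed
    have longest: "length (r x) \<le> length (r m)" if "x \<in> F" for x
      using m(2) fin that by simp
    have "r m \<in> snd x" if x: "x \<in> F" for x
    proof -
      have "snd x \<inter> snd m \<noteq> {}" using meet x m(1) by blast
      thus ?thesis using omit_subgroup_cosets_nested[OF r[OF x] r[OF m(1)] _ longest[OF x]]
          snd_r[OF x] snd_r[OF m(1)] by simp
    qed
    thus ?thesis using r(1)[OF m(1)] by blast
  qed (intro bexI[of _ "[]"], auto simp: carrier_free_grp)
qed

section \<open>The conjugates form a free basis\<close>

abbreviation Fn :: "nat \<Rightarrow> letter list monoid" where
  "Fn n \<equiv> free_grp {..<n}"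

definition conj_word :: "letter \<Rightarrow> letter \<Rightarrow> letter list" where
  "conj_word c m = [c, m, letter_inv c]"

definition conj_basis :: "nat \<Rightarrow> letter list set" where
  "conj_basis n = {conj_word c (i, False) | c i. fst c < n \<and> i < n \<and> i \<noteq> fst c}"

lemma conj_word_carrier:
  "fst c < n \<Longrightarrow> fst m < n \<Longrightarrow> fst m \<noteq> fst c \<Longrightarrow> conj_word c m \<in> carrier (Fn n)"
  by (simp add: conj_word_def carrier_free_grp letter_cancel_def letter_inv_def)

lemma inv_conj_word:
  "fst c < n \<Longrightarrow> fst m < n \<Longrightarrow> fst m \<noteq> fst c \<Longrightarrow>
    inv\<^bsub>Fn n\<^esub> (conj_word c m) = conj_word c (letter_inv m)"
  by (simp add: inv_free_grp conj_word_carrier) (simp add: word_inv_def conj_word_def)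

lemma conj_basis_carrier: "conj_basis n \<subseteq> carrier (Fn n)"
  by (auto simp: conj_basis_def conj_word_carrier)

lemma finite_conj_basis: "finite (conj_basis n)"
proof -
  have "conj_basis n \<subseteq> (\<lambda>(c, i). conj_word c (i, False)) ` (({..<n} \<times> UNIV) \<times> {..<n})"
    by (auto simp: conj_basis_def)
  thus ?thesis by (rule finite_subset) simp
qed

lemma Sset_eq_conj_basis: "Sset n = conj_basis n"
proof -
  have gen: "gen i = [(i, False)]" "inv\<^bsub>FreeGrp n\<^esub> (gen i) = [(i, True)]" if "i < n" for i
    using that inv_free_gen[of i "{..<n}"] by (simp_all add: gen_def FreeGrp_eq_free_grp)
  have "gen j \<otimes>\<^bsub>FreeGrp n\<^esub> gen i \<otimes>\<^bsub>FreeGrp n\<^esub> inv\<^bsub>FreeGrp n\<^esub> (gen j) = conj_word (j, False) (i, False)"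
    and "inv\<^bsub>FreeGrp n\<^esub> (gen j) \<otimes>\<^bsub>FreeGrp n\<^esub> gen i \<otimes>\<^bsub>FreeGrp n\<^esub> gen j = conj_word (j, True) (i, False)"
    if "i < n" "j < n" "i \<noteq> j" for i j
    using that gen[OF that(1)] gen[OF that(2)]
    by (simp_all add: FreeGrp_eq_free_grp mult_free_grp free_reduce_reduced letter_cancel_def
        conj_word_def letter_inv_def)
  thus ?thesis
    unfolding Sset_def conj_basis_def
    by (auto simp: letter_inv_def) (metis (full_types) prod.collapse)+
qed

definition conj_basis_eval :: "nat \<Rightarrow> (letter list \<times> bool) list \<Rightarrow> letter list" where
  "conj_basis_eval n = free_lift (Fn n) id"

lemma conj_basis_eval_hom: "conj_basis_eval n \<in> hom (free_grp (conj_basis n)) (Fn n)"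
  unfolding conj_basis_eval_def
  by (rule free_lift_hom[OF group_free_grp]) (use conj_basis_carrier in auto)

lemma letter_val_conj_basis:
  "fst c < n \<Longrightarrow> i < n \<Longrightarrow> i \<noteq> fst c \<Longrightarrow>
    letter_val (Fn n) id (conj_word c (i, False), b) = conj_word c (i, b)"
  by (cases b) (simp_all add: letter_val_def inv_conj_word letter_inv_def)

lemma free_reduce_conj_word_Cons:
  assumes i: "i \<noteq> fst c" and red: "freely_reduced (c' # m # Z)"
    and m: "c' = c \<Longrightarrow> \<not> letter_cancel (i, b) m"
  shows "\<exists>Z'. free_reduce (conj_word c (i, b) @ c' # m # Z) = c # (i, b) # Z'"
proof -
  have "free_reduce (conj_word c (i, b) @ c' # m # Z)
      = reduce_cons c (reduce_cons (i, b) (reduce_cons (letter_inv c) (c' # m # Z)))"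
    using red unfolding free_reduce_append
    by (simp add: free_reduce_reduced conj_word_def del: reduce_cons.simps)
  also have "\<dots> = c # (i, b) # (if c' = c then m # Z else letter_inv c # c' # m # Z)"
  proof (cases "c' = c")
    case False
    hence "\<not> letter_cancel (letter_inv c) c'"
      by (cases c; cases c') (auto simp: letter_cancel_def letter_inv_def)
    thus ?thesis using False i by (auto simp: letter_cancel_def letter_inv_def)
  qed (use i m in \<open>auto simp: letter_cancel_def letter_inv_def\<close>)
  finally show ?thesis by blast
qed

text \<open>No cancellation reaches the second letter of the leading conjugate: this is why
  the conjugates form a free basis.\<close>

lemma conj_basis_eval_Cons:
  assumes "(conj_word c (i, False), b) # w \<in> carrier (free_grp (conj_basis n))"
  shows "\<exists>Z. conj_basis_eval n ((conj_word c (i, False), b) # w) = c # (i, b) # Z"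
  using assms
proof (induction w arbitrary: c i b)
  case Nil
  hence ci: "fst c < n" "i < n" "i \<noteq> fst c"
    by (auto simp: carrier_free_grp conj_basis_def conj_word_def)
  show ?case using letter_val_conj_basis[OF ci, of b] ci
    by (simp add: conj_basis_eval_def one_free_grp mult_free_grp)
      (simp add: free_reduce_reduced letter_cancel_def letter_inv_def conj_word_def)
next
  case (Cons l w)
  have "fst l \<in> conj_basis n" using Cons.prems by (simp add: carrier_free_grp)
  then obtain c' i' where "fst l = conj_word c' (i', False)" by (auto simp: conj_basis_def)
  then obtain b' where l: "l = (conj_word c' (i', False), b')" by (metis prod.collapse)
  have ci: "fst c < n" "i < n" "i \<noteq> fst c"
    using Cons.prems by (auto simp: carrier_free_grp conj_basis_def conj_word_def)
  have w: "l # w \<in> carrier (free_grp (conj_basis n))"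
    using Cons.prems by (auto simp: carrier_free_grp freely_reduced_Cons)
  obtain Z where Z: "conj_basis_eval n (l # w) = c' # (i', b') # Z"
    using Cons.IH[OF w[unfolded l]] l by blast
  have "conj_basis_eval n (l # w) \<in> carrier (Fn n)" using hom_in_carrier[OF conj_basis_eval_hom w] .
  hence "freely_reduced (c' # (i', b') # Z)" using Z by (simp add: carrier_free_grp)
  moreover have "\<not> letter_cancel (conj_word c (i, False), b) l"
    using Cons.prems by (simp add: carrier_free_grp)
  hence "c' = c \<Longrightarrow> \<not> letter_cancel (i, b) (i', b')" using l by (auto simp: letter_cancel_def)
  moreover have "conj_basis_eval n ((conj_word c (i, False), b) # l # w)
      = free_reduce (conj_word c (i, b) @ conj_basis_eval n (l # w))"
    by (simp add: conj_basis_eval_def letter_val_conj_basis[OF ci] mult_free_grp)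
  ultimately show ?case using free_reduce_conj_word_Cons[OF ci(3)] Z by simp
qed

lemma conj_basis_eval_inj: "inj_on (conj_basis_eval n) (carrier (free_grp (conj_basis n)))"
proof -
  interpret group_hom "free_grp (conj_basis n)" "Fn n" "conj_basis_eval n"
    by (simp add: group_hom_def group_hom_axioms_def group_free_grp conj_basis_eval_hom)
  have "w = []" if w: "w \<in> carrier (free_grp (conj_basis n))" "conj_basis_eval n w = []" for w
  proof (cases w)
    case (Cons l w')
    have "fst l \<in> conj_basis n" using w(1) Cons by (simp add: carrier_free_grp)
    then obtain c i where "fst l = conj_word c (i, False)" by (auto simp: conj_basis_def)
    hence "l = (conj_word c (i, False), snd l)" by (metis prod.collapse)
    thus ?thesis using conj_basis_eval_Cons[of c i "snd l" w' n] w Cons by auto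
  qed
  hence "kernel (free_grp (conj_basis n)) (Fn n) (conj_basis_eval n) = {\<one>\<^bsub>free_grp (conj_basis n)\<^esub>}"
    by (auto simp: kernel_def one_free_grp carrier_free_grp conj_basis_eval_def)
  thus ?thesis using inj_iff_trivial_ker by simp
qed

section \<open>The coset geometry \<open>\<Gamma>\<close>\<close>

lemma conj_basis_eval_letter_subgroup:
  assumes "B \<subseteq> conj_basis n"
  shows "conj_basis_eval n ` letter_subgroup (conj_basis n) B = generate (Fn n) B"
proof -
  interpret group_hom "free_grp (conj_basis n)" "Fn n" "conj_basis_eval n"
    by (simp add: group_hom_def group_hom_axioms_def group_free_grp conj_basis_eval_hom)
  have "conj_basis_eval n [(b, False)] = b" if "b \<in> B" for b
  proof -
    have "b \<in> carrier (Fn n)" using that assms conj_basis_carrier by blast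
    thus ?thesis by (simp add: conj_basis_eval_def letter_val_def one_free_grp mult_free_grp
        free_reduce_reduced carrier_free_grp)
  qed
  hence "conj_basis_eval n ` free_gens B = B" by (force simp: free_gens_def)
  moreover have "free_gens B \<subseteq> carrier (free_grp (conj_basis n))"
    using assms by (auto simp: free_gens_def carrier_free_grp)
  ultimately show ?thesis using generate_img generate_free_gens[OF assms] by metis
qed

lemma Ggrp_eq_image: "Ggrp n = conj_basis_eval n ` carrier (free_grp (conj_basis n))"
  using conj_basis_eval_letter_subgroup[of "conj_basis n" n]
  by (simp add: Ggrp_def FreeGrp_eq_free_grp Sset_eq_conj_basis letter_subgroup_carrier)

lemma Gsub_eq_image: "Gsub n s = conj_basis_eval n ` omit_subgroup (conj_basis n) s"
  using conj_basis_eval_letter_subgroup[of "conj_basis n - {s}" n]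
  by (simp add: Gsub_def FreeGrp_eq_free_grp Sset_eq_conj_basis)

lemma INT_Gsub:
  assumes "J \<noteq> {}"
  shows "(\<Inter>s\<in>J. Gsub n s) = generate (Fn n) (conj_basis n - J)"
proof -
  obtain j where "j \<in> J" using assms by blast
  have "conj_basis_eval n ` (\<Inter>s\<in>J. omit_subgroup (conj_basis n) s)
      = (\<Inter>s\<in>J. conj_basis_eval n ` omit_subgroup (conj_basis n) s)"
    by (rule image_INT[OF conj_basis_eval_inj _ \<open>j \<in> J\<close>]) (simp add: letter_subgroup_subset)
  hence "(\<Inter>s\<in>J. Gsub n s) = conj_basis_eval n ` (\<Inter>s\<in>J. omit_subgroup (conj_basis n) s)"
    by (simp add: Gsub_eq_image)
  also have "\<dots> = generate (Fn n) (conj_basis n - J)"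
    using INT_letter_subgroup[OF assms] conj_basis_eval_letter_subgroup by simp
  finally show ?thesis .
qed

lemma coset_geometry_Gamma: "coset_geometry (Fn n) (Ggrp n) (conj_basis n) (Gsub n)"
proof -
  interpret group "Fn n" by (rule group_free_grp)
  have "subgroup (generate (Fn n) B) (Fn n)" if "B \<subseteq> conj_basis n" for B
    using generate_is_subgroup that conj_basis_carrier by blast
  moreover have "Gsub n s \<subseteq> Ggrp n" for s
    by (simp add: Gsub_def Ggrp_def mono_generate FreeGrp_eq_free_grp Diff_subset)
  ultimately show ?thesis
    by (intro coset_geometry.intro coset_geometry_axioms.intro group_free_grp)
      (simp_all add: Ggrp_def Gsub_def FreeGrp_eq_free_grp Sset_eq_conj_basis finite_conj_basis)
qed

lemma helly_Gamma: "helly_cosets (Fn n) (Ggrp n) (conj_basis n) (Gsub n)"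
proof -
  have "helly_cosets (Fn n) (conj_basis_eval n ` carrier (free_grp (conj_basis n))) (conj_basis n)
      (\<lambda>s. conj_basis_eval n ` omit_subgroup (conj_basis n) s)"
    by (rule helly_cosets_image[OF group_free_grp conj_basis_eval_hom conj_basis_eval_inj _
          letter_subgroup_subset helly_free_grp]) simp
  thus ?thesis by (simp add: Ggrp_eq_image Gsub_eq_image[abs_def])
qed

lemma parabolic_Gamma:
  assumes "J \<subseteq> conj_basis n"
  shows "coset_geometry.parabolic (Ggrp n) (Gsub n) J = generate (Fn n) (conj_basis n - J)"
proof (cases "J = {}")
  case True
  thus ?thesis
    by (simp add: coset_geometry.parabolic_def[OF coset_geometry_Gamma])
      (simp add: Ggrp_def FreeGrp_eq_free_grp Sset_eq_conj_basis)
next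
  case False
  have "(\<Inter>s\<in>J. Gsub n s) \<subseteq> Ggrp n"
    using False coset_geometry.H_subset_G[OF coset_geometry_Gamma] assms by blast
  thus ?thesis
    using INT_Gsub[OF False] by (auto simp: coset_geometry.parabolic_def[OF coset_geometry_Gamma])
qed

lemma generation_criterion_Gamma:
  assumes J: "J \<subseteq> conj_basis n" and card: "2 \<le> card (conj_basis n - J)"
  shows "coset_geometry.parabolic (Ggrp n) (Gsub n) J
    \<subseteq> generate (Fn n) (\<Union>i\<in>conj_basis n - J. coset_geometry.parabolic (Ggrp n) (Gsub n) (insert i J))"
proof -
  interpret group "Fn n" by (rule group_free_grp)
  have "conj_basis n - J \<subseteq> (\<Union>i\<in>conj_basis n - J. generate (Fn n) (conj_basis n - insert i J))"
  proof
    fix s assume s: "s \<in> conj_basis n - J"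
    have "\<not> conj_basis n - J \<subseteq> {s}" using card card_mono[of "{s}" "conj_basis n - J"] by auto
    then obtain i where "i \<in> conj_basis n - J" "i \<noteq> s" by blast
    thus "s \<in> (\<Union>i\<in>conj_basis n - J. generate (Fn n) (conj_basis n - insert i J))"
      using s generate.incl[of s "conj_basis n - insert i J" "Fn n"] by blast
  qed
  hence "generate (Fn n) (conj_basis n - J)
      \<subseteq> generate (Fn n) (\<Union>i\<in>conj_basis n - J. generate (Fn n) (conj_basis n - insert i J))"
    by (rule mono_generate)
  thus ?thesis using J by (simp add: parabolic_Gamma)
qed

section \<open>The group \<open>K\<close> of correlations\<close>

lemma fsubst_eq_restrict_free_lift: "fsubst n f = restrict (free_lift (Fn n) f) (carrier (Fn n))"
  unfolding fsubst_def free_lift_def letter_val_def FreeGrp_eq_free_grp ..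

lemma fsubst_hom:
  assumes "\<And>i. i < n \<Longrightarrow> f i \<in> carrier (Fn n)"
  shows "fsubst n f \<in> hom (Fn n) (Fn n)"
proof -
  have "free_lift (Fn n) f \<in> hom (Fn n) (Fn n)" by (rule free_lift_hom[OF group_free_grp]) (use assms in auto)
  thus ?thesis unfolding fsubst_eq_restrict_free_lift
    by (auto simp: hom_def group.is_monoid[OF group_free_grp] monoid.m_closed)
qed

lemma fsubst_letter:
  assumes "i < n" "f i \<in> carrier (Fn n)"
  shows "fsubst n f [(i, b)] = (if b then inv\<^bsub>Fn n\<^esub> (f i) else f i)"
proof -
  interpret group "Fn n" by (rule group_free_grp)
  show ?thesis using assms inv_closed[OF assms(2)]
    by (simp add: fsubst_eq_restrict_free_lift carrier_free_grp letter_val_def)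
qed

lemma fsubst_gen: "i < n \<Longrightarrow> f i \<in> carrier (Fn n) \<Longrightarrow> fsubst n f (gen i) = f i"
  using fsubst_letter[of i n f False] by (simp add: gen_def)

lemma fsubst_auto:
  assumes f: "\<And>i. i < n \<Longrightarrow> f i \<in> carrier (Fn n)" and g: "\<And>i. i < n \<Longrightarrow> g i \<in> carrier (Fn n)"
    and fg: "\<And>i. i < n \<Longrightarrow> fsubst n f (fsubst n g (gen i)) = gen i"
    and gf: "\<And>i. i < n \<Longrightarrow> fsubst n g (fsubst n f (gen i)) = gen i"
  shows "fsubst n f \<in> auto (Fn n)"
proof -
  have hf: "fsubst n f \<in> hom (Fn n) (Fn n)" and hg: "fsubst n g \<in> hom (Fn n) (Fn n)"
    using fsubst_hom f g by blast+
  have id: "(\<lambda>x. x) \<in> hom (Fn n) (Fn n)" by (auto simp: hom_def)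
  have hfg: "(\<lambda>x. fsubst n f (fsubst n g x)) \<in> hom (Fn n) (Fn n)"
    and hgf: "(\<lambda>x. fsubst n g (fsubst n f x)) \<in> hom (Fn n) (Fn n)"
    using hf hg by (auto simp: hom_def Pi_def)
  have "fsubst n f (fsubst n g w) = w" "fsubst n g (fsubst n f w) = w" if "w \<in> carrier (Fn n)" for w
    using free_grp_hom_eqI[OF group_free_grp hfg id _ that] free_grp_hom_eqI[OF group_free_grp hgf id _ that]
      fg gf by (simp_all add: gen_def)
  hence "bij_betw (fsubst n f) (carrier (Fn n)) (carrier (Fn n))"
    using hf hg by (intro bij_betw_byWitness[where f'="fsubst n g"]) (auto simp: hom_def)
  moreover have "fsubst n f \<in> extensional (carrier (Fn n))" by (simp add: fsubst_eq_restrict_free_lift)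
  ultimately show ?thesis using hf by (simp add: auto_def Bij_def)
qed

lemma gen_carrier: "i < n \<Longrightarrow> gen i \<in> carrier (Fn n)"
  by (simp add: carrier_free_grp gen_def)

lemma inv_gen: "i < n \<Longrightarrow> inv\<^bsub>Fn n\<^esub> gen i = [(i, True)]"
  by (simp add: gen_def inv_free_gen)

lemma phi1_auto: "phi1 n \<in> auto (FreeGrp n)"
proof -
  define f where "f = (\<lambda>i. if i = 0 then inv\<^bsub>Fn n\<^esub> (gen 0) else gen i)"
  have f: "f i \<in> carrier (Fn n)" if "i < n" for i
    using that group.inv_closed[OF group_free_grp gen_carrier[of 0 n]] gen_carrier[of i n]
    by (simp add: f_def)
  have "fsubst n f (fsubst n f (gen i)) = gen i" if i: "i < n" for i
  proof (cases "i = 0")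
    case True
    have "fsubst n f (gen 0) = [(0, True)]" "fsubst n f [(0, True)] = inv\<^bsub>Fn n\<^esub> (f 0)"
      using fsubst_gen[of 0 n f] fsubst_letter[of 0 n f True] f[of 0] i True
      by (simp_all add: f_def inv_gen)
    thus ?thesis
      using True i group.inv_inv[OF group_free_grp gen_carrier[of 0 n]] by (simp add: f_def)
  next
    case False
    thus ?thesis using fsubst_gen[of i n f] f[OF i] i by (simp add: f_def)
  qed
  moreover have "phi1 n = fsubst n f" unfolding phi1_def f_def FreeGrp_eq_free_grp ..
  ultimately show ?thesis using fsubst_auto[OF f f] by (simp add: FreeGrp_eq_free_grp)
qed

lemma phi_tau_auto: "n \<ge> 2 \<Longrightarrow> phi_tau n \<in> auto (FreeGrp n)"
proof -
  assume n: "n \<ge> 2"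
  define f :: "nat \<Rightarrow> letter list" where "f = (\<lambda>i. if i = 0 then gen 1 else if i = 1 then gen 0 else gen i)"
  have f: "f i \<in> carrier (Fn n)" if "i < n" for i using that n by (simp add: f_def gen_carrier)
  have "fsubst n f (fsubst n f (gen i)) = gen i" if "i < n" for i
    using that n fsubst_gen[of _ n f, OF _ f] by (simp add: f_def)
  moreover have "phi_tau n = fsubst n f" unfolding phi_tau_def f_def ..
  ultimately show ?thesis using fsubst_auto[OF f f] by (simp add: FreeGrp_eq_free_grp)
qed

lemma phi_rho_auto: "n \<ge> 2 \<Longrightarrow> phi_rho n \<in> auto (FreeGrp n)"
proof -
  assume n: "n \<ge> 2"
  define f :: "nat \<Rightarrow> letter list" where "f = (\<lambda>i. gen ((i + 1) mod n))"
  define g :: "nat \<Rightarrow> letter list" where "g = (\<lambda>i. gen ((i + (n - 1)) mod n))"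
  have f: "f i \<in> carrier (Fn n)" and g: "g i \<in> carrier (Fn n)" if "i < n" for i
    using that n by (simp_all add: f_def g_def gen_carrier)
  have "((i + (n - 1)) mod n + 1) mod n = i" "((i + 1) mod n + (n - 1)) mod n = i" if "i < n" for i
  proof -
    have "i + (n - 1) + 1 = i + n" "i + 1 + (n - 1) = i + n" using n by simp_all
    thus "((i + (n - 1)) mod n + 1) mod n = i" "((i + 1) mod n + (n - 1)) mod n = i"
      using that by (metis mod_add_left_eq mod_add_self2 mod_less)+
  qed
  hence "fsubst n f (fsubst n g (gen i)) = gen i" "fsubst n g (fsubst n f (gen i)) = gen i"
    if "i < n" for i
    using that n fsubst_gen[of _ n f, OF _ f] fsubst_gen[of _ n g, OF _ g] by (simp_all add: f_def g_def)
  moreover have "phi_rho n = fsubst n f" unfolding phi_rho_def f_def ..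
  ultimately show ?thesis using fsubst_auto[OF f g] by (simp add: FreeGrp_eq_free_grp)
qed

definition signed_conj_basis :: "nat \<Rightarrow> letter list set" where
  "signed_conj_basis n = {conj_word c m | c m. fst c < n \<and> fst m < n \<and> fst m \<noteq> fst c}"

lemma conj_word_eq_iff [simp]: "conj_word c m = conj_word c' m' \<longleftrightarrow> c = c' \<and> m = m'"
  by (auto simp: conj_word_def)

lemma signed_conj_basis_eq: "signed_conj_basis n = conj_basis n \<union> m_inv (Fn n) ` conj_basis n"
proof (intro equalityI subsetI)
  fix y assume "y \<in> signed_conj_basis n"
  then obtain c i b where y: "y = conj_word c (i, b)" "fst c < n" "i < n" "i \<noteq> fst c"
    unfolding signed_conj_basis_def by force
  hence S: "conj_word c (i, False) \<in> conj_basis n" unfolding conj_basis_def by blast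
  show "y \<in> conj_basis n \<union> m_inv (Fn n) ` conj_basis n"
  proof (cases b)
    case True
    hence "y = inv\<^bsub>Fn n\<^esub> (conj_word c (i, False))"
      using inv_conj_word[of c n "(i, False)"] y by (simp add: letter_inv_def)
    thus ?thesis using S by blast
  qed (use S y in simp)
next
  fix y assume "y \<in> conj_basis n \<union> m_inv (Fn n) ` conj_basis n"
  then obtain c i where ci: "fst c < n" "i < n" "i \<noteq> fst c"
    and "y = conj_word c (i, False) \<or> y = inv\<^bsub>Fn n\<^esub> (conj_word c (i, False))"
    unfolding conj_basis_def by blast
  moreover have "inv\<^bsub>Fn n\<^esub> (conj_word c (i, False)) = conj_word c (i, True)"
    using inv_conj_word[of c n "(i, False)"] ci by (simp add: letter_inv_def)
  ultimately obtain b where "y = conj_word c (i, b)" by metis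
  moreover have "fst (i, b) < n" "fst (i, b) \<noteq> fst c" using ci by simp_all
  ultimately show "y \<in> signed_conj_basis n" using ci(1) unfolding signed_conj_basis_def by blast
qed

lemma conj_basis_inv_disjoint: "conj_basis n \<inter> m_inv (Fn n) ` conj_basis n = {}"
proof -
  have "inv\<^bsub>Fn n\<^esub> (conj_word c (i, False)) = conj_word c (i, True)"
    if "fst c < n" "i < n" "i \<noteq> fst c" for c i
    using inv_conj_word[of c n "(i, False)"] that by (simp add: letter_inv_def)
  thus ?thesis unfolding conj_basis_def by auto
qed

lemma signed_conj_basis_carrier: "signed_conj_basis n \<subseteq> carrier (Fn n)"
  by (auto simp: signed_conj_basis_def conj_word_carrier)

lemma finite_signed_conj_basis: "finite (signed_conj_basis n)"
  by (simp add: signed_conj_basis_eq finite_conj_basis)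

lemma fsubst_signed_conj_basis:
  assumes f: "\<And>i. i < n \<Longrightarrow> f i = [\<tau> i]" and \<tau>: "\<And>i. i < n \<Longrightarrow> fst (\<tau> i) < n"
    and inj: "inj_on (\<lambda>i. fst (\<tau> i)) {..<n}"
  shows "fsubst n f ` signed_conj_basis n \<subseteq> signed_conj_basis n"
proof
  fix y assume "y \<in> fsubst n f ` signed_conj_basis n"
  then obtain c m where cm: "y = fsubst n f (conj_word c m)" "fst c < n" "fst m < n" "fst m \<noteq> fst c"
    by (auto simp: signed_conj_basis_def)
  define t where "t a = (if snd a then letter_inv (\<tau> (fst a)) else \<tau> (fst a))" for a
  have fst_t: "fst (t a) = fst (\<tau> (fst a))" for a by (simp add: t_def)
  have val: "letter_val (Fn n) f a = [t a]" if "fst a < n" for a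
    using that f \<tau> by (auto simp: letter_val_def t_def inv_free_grp carrier_free_grp word_inv_def)
  have ne: "fst (t m) \<noteq> fst (t c)" using inj_onD[OF inj] cm(2-4) by (auto simp: fst_t)
  have t_inv: "t (letter_inv c) = letter_inv (t c)" by (simp add: t_def letter_inv_def)
  have "y = free_lift (Fn n) f (conj_word c m)"
    using cm conj_word_carrier by (simp add: fsubst_eq_restrict_free_lift)
  also have "\<dots> = free_reduce [t c, t m, letter_inv (t c)]"
    using cm val[of c] val[of m] val[of "letter_inv c"] t_inv
    by (simp add: conj_word_def one_free_grp mult_free_grp free_reduce_def)
  also have "\<dots> = conj_word (t c) (t m)"
    using ne by (simp add: free_reduce_reduced letter_cancel_def conj_word_def)
  moreover have "fst (t c) < n" "fst (t m) < n" using cm \<tau> by (simp_all add: fst_t)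
  ultimately show "y \<in> signed_conj_basis n" using ne unfolding signed_conj_basis_def by blast
qed

lemma phi1_signed_conj_basis: "phi1 n ` signed_conj_basis n \<subseteq> signed_conj_basis n"
proof -
  define \<tau> :: "nat \<Rightarrow> letter" where "\<tau> i = (if i = 0 then (0, True) else (i, False))" for i
  have "(if i = 0 then inv\<^bsub>Fn n\<^esub> (gen 0) else gen i) = [\<tau> i]" if "i < n" for i
    using that inv_gen[of 0 n] by (simp add: \<tau>_def gen_def)
  moreover have "fst (\<tau> i) < n" if "i < n" for i using that by (simp add: \<tau>_def)
  moreover have "inj_on (\<lambda>i. fst (\<tau> i)) {..<n}" by (simp add: \<tau>_def inj_on_def)
  ultimately show ?thesis unfolding phi1_def FreeGrp_eq_free_grp by (rule fsubst_signed_conj_basis)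
qed

lemma phi_tau_signed_conj_basis: "n \<ge> 2 \<Longrightarrow> phi_tau n ` signed_conj_basis n \<subseteq> signed_conj_basis n"
  unfolding phi_tau_def
  by (rule fsubst_signed_conj_basis[where
        \<tau>="\<lambda>i. if i = 0 then (1, False) else if i = 1 then (0, False) else (i, False)"])
     (auto simp: gen_def inj_on_def)

lemma phi_rho_signed_conj_basis: "n \<ge> 2 \<Longrightarrow> phi_rho n ` signed_conj_basis n \<subseteq> signed_conj_basis n"
  unfolding phi_rho_def
  by (rule fsubst_signed_conj_basis[where \<tau>="\<lambda>i. ((i + 1) mod n, False)"])
     (auto simp: gen_def inj_on_def mod_if split: if_splits)

lemma Kgrp_stabilises_signed_conj_basis:
  assumes "n \<ge> 2" "\<phi> \<in> Kgrp n"
  shows "\<phi> \<in> auto (Fn n)" "\<phi> ` signed_conj_basis n \<subseteq> signed_conj_basis n"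
proof -
  interpret group "Fn n" by (rule group_free_grp)
  have "{phi1 n, phi_rho n, phi_tau n} \<subseteq> {\<phi> \<in> auto (Fn n). \<phi> ` signed_conj_basis n \<subseteq> signed_conj_basis n}"
    using phi1_auto phi_rho_auto phi_tau_auto phi1_signed_conj_basis phi_rho_signed_conj_basis
      phi_tau_signed_conj_basis assms(1) by (simp add: FreeGrp_eq_free_grp)
  hence "Kgrp n \<subseteq> {\<phi> \<in> auto (Fn n). \<phi> ` signed_conj_basis n \<subseteq> signed_conj_basis n}"
    unfolding Kgrp_def FreeGrp_eq_free_grp
    by (rule group.generate_subgroup_incl[OF AutoGroup _ subgroup_auto_stabilising[OF
          finite_signed_conj_basis signed_conj_basis_carrier]])
  thus "\<phi> \<in> auto (Fn n)" "\<phi> ` signed_conj_basis n \<subseteq> signed_conj_basis n" using assms(2) by blast+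
qed

lemma Kgrp_acts_by_correlations:
  assumes n: "n \<ge> 2" and \<phi>: "\<phi> \<in> Kgrp n"
  shows "\<phi> ` Ggrp n = Ggrp n
    \<and> (\<exists>\<sigma>. bij_betw \<sigma> (conj_basis n) (conj_basis n) \<and> (\<forall>s \<in> conj_basis n. \<phi> ` Gsub n s = Gsub n (\<sigma> s))
      \<and> (\<exists>\<alpha>. is_correlation (coset_elems (Fn n) (Ggrp n) (conj_basis n) (Gsub n)) coset_inc fst \<alpha>
            \<and> (\<forall>s \<in> conj_basis n. \<forall>g \<in> Ggrp n.
                 \<alpha> (s, Gsub n s #>\<^bsub>Fn n\<^esub> g) = (\<sigma> s, (\<phi> ` Gsub n s) #>\<^bsub>Fn n\<^esub> \<phi> g))))"
proof -
  interpret group "Fn n" by (rule group_free_grp)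
  have auto: "\<phi> \<in> auto (Fn n)" and stable: "\<phi> ` signed_conj_basis n \<subseteq> signed_conj_basis n"
    using Kgrp_stabilises_signed_conj_basis[OF n \<phi>] by blast+
  have hom: "\<phi> \<in> hom (Fn n) (Fn n)" and inj: "inj_on \<phi> (carrier (Fn n))"
    using auto by (auto simp: auto_def Bij_def bij_betw_def)
  obtain \<sigma> where \<sigma>: "bij_betw \<sigma> (conj_basis n) (conj_basis n)"
    and \<phi>\<sigma>: "\<And>s. s \<in> conj_basis n \<Longrightarrow> \<phi> s = \<sigma> s \<or> \<phi> s = inv\<^bsub>Fn n\<^esub> (\<sigma> s)"
    using signed_permutation_of_hom[OF hom inj finite_conj_basis conj_basis_carrier
        conj_basis_inv_disjoint] stable by (auto simp: signed_conj_basis_eq)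
  have image_generate: "\<phi> ` generate (Fn n) Q = generate (Fn n) (\<sigma> ` Q)" if "Q \<subseteq> conj_basis n" for Q
    using hom_image_generate_signed[OF hom conj_basis_carrier that] \<phi>\<sigma> bij_betwE[OF \<sigma>] by blast
  have G: "\<phi> ` Ggrp n = Ggrp n"
    using image_generate[of "conj_basis n"] bij_betw_imp_surj_on[OF \<sigma>]
    by (simp add: Ggrp_def FreeGrp_eq_free_grp Sset_eq_conj_basis)
  have H: "\<phi> ` Gsub n s = Gsub n (\<sigma> s)" if "s \<in> conj_basis n" for s
  proof -
    have "\<sigma> ` (conj_basis n - {s}) = conj_basis n - {\<sigma> s}"
      using that \<sigma> inj_on_image_set_diff[of \<sigma> "conj_basis n" "conj_basis n" "{s}"]
      by (simp add: bij_betw_def)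
    thus ?thesis using image_generate[of "conj_basis n - {s}"]
      by (simp add: Gsub_def FreeGrp_eq_free_grp Sset_eq_conj_basis)
  qed
  have "\<phi> ` (Gsub n s #>\<^bsub>Fn n\<^esub> g) = (\<phi> ` Gsub n s) #>\<^bsub>Fn n\<^esub> \<phi> g"
    if "s \<in> conj_basis n" "g \<in> Ggrp n" for s g
    using hom_r_coset[OF hom coset_geometry.H_carrier[OF coset_geometry_Gamma that(1)]
        coset_geometry.G_carrier[OF coset_geometry_Gamma that(2)]] .
  hence "\<forall>s \<in> conj_basis n. \<forall>g \<in> Ggrp n. (\<lambda>x. (\<sigma> (fst x), \<phi> ` snd x)) (s, Gsub n s #>\<^bsub>Fn n\<^esub> g)
      = (\<sigma> s, (\<phi> ` Gsub n s) #>\<^bsub>Fn n\<^esub> \<phi> g)"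
    by simp
  moreover have "is_correlation (coset_elems (Fn n) (Ggrp n) (conj_basis n) (Gsub n)) coset_inc fst
      (\<lambda>x. (\<sigma> (fst x), \<phi> ` snd x))"
    by (rule coset_geometry.correlation_of_automorphism[OF coset_geometry_Gamma hom inj G \<sigma> H])
  ultimately show ?thesis using G H \<sigma> by blast
qed

theorem mainTheorem9:
  fixes n :: nat
  assumes "n \<ge> 2"
  shows "is_incidence_system (coset_elems (FreeGrp n) (Ggrp n) (Sset n) (Gsub n)) coset_inc fst (Sset n)
   \<and> is_geometry (coset_elems (FreeGrp n) (Ggrp n) (Sset n) (Gsub n)) coset_inc fst (Sset n)
   \<and> residually_connected (coset_elems (FreeGrp n) (Ggrp n) (Sset n) (Gsub n)) coset_inc fst (Sset n)
   \<and> flag_transitive (FreeGrp n) (Ggrp n) (Sset n) (Gsub n)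
   \<and> {phi1 n, phi_rho n, phi_tau n} \<subseteq> auto (FreeGrp n)
   \<and> (\<forall>\<phi> \<in> Kgrp n.
        \<phi> ` Ggrp n = Ggrp n
      \<and> (\<exists>\<sigma>. bij_betw \<sigma> (Sset n) (Sset n) \<and> (\<forall>s \<in> Sset n. \<phi> ` Gsub n s = Gsub n (\<sigma> s))
           \<and> (\<exists>\<alpha>. is_correlation (coset_elems (FreeGrp n) (Ggrp n) (Sset n) (Gsub n)) coset_inc fst \<alpha>
                 \<and> (\<forall>s \<in> Sset n. \<forall>g \<in> Ggrp n.
                      \<alpha> (s, Gsub n s #>\<^bsub>FreeGrp n\<^esub> g) = (\<sigma> s, (\<phi> ` Gsub n s) #>\<^bsub>FreeGrp n\<^esub> \<phi> g)))))"
proof -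
  interpret Gamma: coset_geometry "Fn n" "Ggrp n" "conj_basis n" "Gsub n"
    by (rule coset_geometry_Gamma)
  have gens: "{phi1 n, phi_rho n, phi_tau n} \<subseteq> auto (Fn n)"
    using phi1_auto phi_rho_auto[OF assms] phi_tau_auto[OF assms] by (simp add: FreeGrp_eq_free_grp)
  show ?thesis
    unfolding Sset_eq_conj_basis FreeGrp_eq_free_grp
    by (intro conjI ballI gens Gamma.incidence_system Gamma.geometry[OF helly_Gamma]
        Gamma.flag_transitive[OF helly_Gamma]
        Gamma.residually_connected[OF helly_Gamma generation_criterion_Gamma]
        Kgrp_acts_by_correlations[OF assms])
qed

end
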